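(* Let $l\geq 1$, let $q_1\geq q_2\geq\cdots\geq q_l\geq 1$ be integers, $N=q_1+\cdots+q_l$, and $k\in\mathbb{C}$. Define the following elements of $V^{\kappa}(\mathfrak{b})$ (notation as in the context): $$W^{(1)}_{p,q}=\sum_{\substack{1\leq i,j\leq N,\ \mathrm{row}(i)=p,\ \mathrm{row}(j)=q,\\ \mathrm{col}(i)=\mathrm{col}(j)}} e_{i,j}[-1]$$ for pairs $(p,q)$ with either $1\leq p,q\leq q_l$ or $q_l<p=q\leq q_1$; and, for $1\leq p,q\leq q_l$, \begin{align*} W^{(2)}_{p,q}&=\sum_{\substack{\mathrm{col}(i)=\mathrm{col}(j)+1\\ \mathrm{row}(i)=p,\ \mathrm{row}(j)=q}}e_{i,j}[-1]-\sum_{\substack{\mathrm{col}(i)=\mathrm{col}(j)\\ \mathrm{row}(i)=p,\ \mathrm{row}(j)=q}}\gamma_{\mathrm{col}(i)}\,e_{i,j}[-2]\\ &\quad+\sum_{\substack{\mathrm{col}(u)=\mathrm{col}(j)<\mathrm{col}(i)=\mathrm{col}(v)\\ \mathrm{row}(u)=\mathrm{row}(v)\leq q_l\\ \mathrm{row}(i)=p,\ \mathrm{row}(j)=q}} e_{u,j}[-1]\,e_{i,v}[-1] -\sum_{\substack{\mathrm{col}(u)=\mathrm{col}(j)\geq\mathrm{col}(i)=\mathrm{col}(v)\\ \mathrm{row}(u)=\mathrm{row}(v)>q_l\\ \mathrm{row}(i)=p,\ \mathrm{row}(j)=q}} e_{u,j}[-1]\,e_{i,v}[-1], \end{align*} where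 all indices $i,j,u,v$ range over $\{1,\dots,N\}$. Then every such $W^{(1)}_{p,q}$ and every such $W^{(2)}_{p,q}$ lies in the $W$-algebra $\mathcal{W}^k(\mathfrak{gl}(N),f)$, i.e. $d_0(W^{(1)}_{p,q})=0$ and $d_0(W^{(2)}_{p,q})=0$.
   Context: Indexing: for $1\leq i\leq N$, $\mathrm{col}(i)=s$ if $\sum_{j=1}^{s-1}q_j<i\leq\sum_{j=1}^{s}q_j$, and $\mathrm{row}(i)=i-\sum_{j=1}^{\mathrm{col}(i)-1}q_j$. For an index $i$, $\hat{i}$ denotes the index with $\mathrm{col}(\hat i)=\mathrm{col}(i)+1$, $\mathrm{row}(\hat i)=\mathrm{row}(i)$ (it exists iff $\mathrm{col}(i)<l$ and $\mathrm{row}(i)\leq q_{\mathrm{col}(i)+1}$), and $\tilde{i}$ the index with $\mathrm{col}(\tilde i)=\mathrm{col}(i)-1$, $\mathrm{row}(\tilde i)=\mathrm{row}(i)$ (exists iff $\mathrm{col}(i)>1$); any term involving a nonexistent $\hat i$ or $\tilde i$ is interpreted as $0$. The nilpotent element is $f=\sum_{j}e_{\hat j,j}\in\mathfrak{gl}(N)$ (sum over $j$ for which $\hat j$ exists), where $e_{i,j}$ are matrix units. Set $\alpha_s=k+N-q_s$ and $\gamma_a=\sum_{u=a+1}^{l}\alpha_u$. Let $\mathfrak{b}=\bigoplus_{\mathrm{col}(i)\geq\mathrm{col}(j)}\mathbb{C}e_{i,j}\subset\mathfrak{gl}(N)$ with bilinear form $\kappa(e_{i,j},e_{p,q})=\alpha_{\mathrm{col}(i)}\delta_{i,q}\delta_{p,j}+\delta_{i,j}\delta_{p,q}$.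 Let $\mathfrak{a}=\mathfrak{b}\oplus\bigoplus_{\mathrm{col}(i)>\mathrm{col}(j)}\mathbb{C}\psi_{i,j}$ be the Lie superalgebra with $e_{i,j}$ even, $\psi_{i,j}$ odd, brackets of $\mathfrak b$ as in $\mathfrak{gl}(N)$, $[e_{i,j},\psi_{p,q}]=\delta_{j,p}\psi_{i,q}-\delta_{i,q}\psi_{p,j}$, $[\psi_{i,j},\psi_{p,q}]=0$, and form $\tilde\kappa$ equal to $\kappa$ on $\mathfrak b$ and zero on all pairs involving some $\psi$. $V^{\kappa}(\mathfrak b)\subset V^{\tilde\kappa}(\mathfrak a)$ are the universal affine vertex (super)algebras, with OPE $u(z)v(w)\sim [u,v](w)/(z-w)+\tilde\kappa(u,v)/(z-w)^2$ for $u,v\in\mathfrak a$. For $u\in\mathfrak a$, $u[-s]$ denotes the state $ut^{-s}|0\rangle$, and juxtaposition denotes the $(-1)$-product, $x\,y=x_{(-1)}y$ (right-nested for several factors). $d_0\colon V^{\kappa}(\mathfrak b)\to V^{\tilde\kappa}(\mathfrak a)$ is the odd map (derivation of all $n$-th products, i.e. $d_0(x_{(m)}y)=(d_0x)_{(m)}y+x_{(m)}d_0y$ for even $x$) with $d_0|0\rangle=0$, $d_0\partial=\partial d_0$, and \begin{align*} d_0(e_{i,j}[-1])&=\sum_{\mathrm{col}(i)>\mathrm{col}(r)\geq\mathrm{col}(j)}e_{r,j}[-1]\psi_{i,r}[-1]-\sum_{\mathrm{col}(j)<\mathrm{col}(r)\leq\mathrm{col}(i)}\psi_{r,j}[-1]e_{i,r}[-1]\\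 &\quad+\delta(\mathrm{col}(i)>\mathrm{col}(j))\,\alpha_{\mathrm{col}(i)}\psi_{i,j}[-2]+\psi_{\hat i,j}[-1]-\psi_{i,\tilde j}[-1]. \end{align*} The $W$-algebra is $\mathcal{W}^k(\mathfrak{gl}(N),f)=\{y\in V^{\kappa}(\mathfrak b)\mid d_0(y)=0\}$. *)

theory Defs
  imports Complex_Main
begin

section \<open>Combinatorics of the pyramid (columns of heights q 1 >= ... >= q l)\<close>

definition psum :: "(nat \<Rightarrow> nat) \<Rightarrow> nat \<Rightarrow> nat" where
  "psum q s = (\<Sum>j = 1..s. q j)"

definition Nq :: "(nat \<Rightarrow> nat) \<Rightarrow> nat \<Rightarrow> nat" where
  "Nq q l = psum q l"

definition colq :: "(nat \<Rightarrow> nat) \<Rightarrow> nat \<Rightarrow> nat" where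
  "colq q i = (LEAST s. i \<le> psum q s)"

definition rowq :: "(nat \<Rightarrow> nat) \<Rightarrow> nat \<Rightarrow> nat" where
  "rowq q i = i - psum q (colq q i - 1)"

definition has_hat :: "(nat \<Rightarrow> nat) \<Rightarrow> nat \<Rightarrow> nat \<Rightarrow> bool" where
  "has_hat q l i \<longleftrightarrow> colq q i < l \<and> rowq q i \<le> q (colq q i + 1)"

definition hat :: "(nat \<Rightarrow> nat) \<Rightarrow> nat \<Rightarrow> nat" where
  "hat q i = psum q (colq q i) + rowq q i"

definition has_tilde :: "(nat \<Rightarrow> nat) \<Rightarrow> nat \<Rightarrow> bool" where
  "has_tilde q i \<longleftrightarrow> 1 < colq q i"

definition tilde :: "(nat \<Rightarrow> nat) \<Rightarrow> nat \<Rightarrow> nat" where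
  "tilde q i = psum q (colq q i - 2) + rowq q i"

definition alpha :: "(nat \<Rightarrow> nat) \<Rightarrow> nat \<Rightarrow> complex \<Rightarrow> nat \<Rightarrow> complex" where
  "alpha q l k s = k + of_nat (Nq q l) - of_nat (q s)"

definition gamma :: "(nat \<Rightarrow> nat) \<Rightarrow> nat \<Rightarrow> complex \<Rightarrow> nat \<Rightarrow> complex" where
  "gamma q l k a = (\<Sum>u \<in> {a+1..l}. alpha q l k u)"

definition idx :: "(nat \<Rightarrow> nat) \<Rightarrow> nat \<Rightarrow> nat list" where
  "idx q l = [1..<Nq q l + 1]"

section \<open>The Lie superalgebra a = b + (odd part)\<close>

datatype gen = E nat nat | Psi nat nat

fun is_odd_gen :: "gen \<Rightarrow> bool" where
  "is_odd_gen (E i j) = False"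
| "is_odd_gen (Psi i j) = True"

fun valid_gen :: "(nat \<Rightarrow> nat) \<Rightarrow> nat \<Rightarrow> gen \<Rightarrow> bool" where
  "valid_gen q l (E i j) \<longleftrightarrow> 1 \<le> i \<and> i \<le> Nq q l \<and> 1 \<le> j \<and> j \<le> Nq q l \<and> colq q j \<le> colq q i"
| "valid_gen q l (Psi i j) \<longleftrightarrow> 1 \<le> i \<and> i \<le> Nq q l \<and> 1 \<le> j \<and> j \<le> Nq q l \<and> colq q j < colq q i"

definition dlt :: "nat \<Rightarrow> nat \<Rightarrow> complex" where
  "dlt a b = (if a = b then 1 else 0)"

fun brk :: "gen \<Rightarrow> gen \<Rightarrow> (complex \<times> gen) list" where
  "brk (E i j) (E p r) = [(dlt j p, E i r), (- dlt r i, E p j)]"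
| "brk (E i j) (Psi p r) = [(dlt j p, Psi i r), (- dlt i r, Psi p j)]"
| "brk (Psi p r) (E i j) = [(- dlt j p, Psi i r), (dlt i r, Psi p j)]"
| "brk (Psi p r) (Psi i j) = []"

fun kap :: "(nat \<Rightarrow> nat) \<Rightarrow> nat \<Rightarrow> complex \<Rightarrow> gen \<Rightarrow> gen \<Rightarrow> complex" where
  "kap q l k (E i j) (E p r) = alpha q l k (colq q i) * dlt i r * dlt p j + dlt i j * dlt p r"
| "kap q l k _ _ = 0"

section \<open>The universal affine vertex superalgebra V^kappa-tilde(a)\<close>

text \<open>A letter (x, n) stands for the mode x t^n of the affinization of a.  A word
  [g1, ..., gr] stands for the element g1 g2 ... gr of the free algebra on the modes,
  and acts on the vacuum: it represents g1 g2 ... gr |0>.  Elements are represented by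
  formal finite linear combinations of words.\<close>

type_synonym letter = "gen \<times> int"
type_synonym word = "letter list"
type_synonym lc = "(complex \<times> word) list"

definition vec_of :: "lc \<Rightarrow> word \<Rightarrow> complex" where
  "vec_of L = (\<lambda>w. sum_list (map (\<lambda>(c, u). if u = w then c else 0) L))"

definition valid_word :: "(nat \<Rightarrow> nat) \<Rightarrow> nat \<Rightarrow> word \<Rightarrow> bool" where
  "valid_word q l w \<longleftrightarrow> (\<forall>x \<in> set w. valid_gen q l (fst x))"

definition sgn_gen :: "gen \<Rightarrow> gen \<Rightarrow> complex" where
  "sgn_gen a b = (if is_odd_gen a \<and> is_odd_gen b then -1 else 1)"

text \<open>The relation  (a t^m)(b t^n) - (-1)^{|a||b|} (b t^n)(a t^m) = [a,b] t^{m+n} + m delta_{m+n,0} kappa(a,b),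
  sandwiched between words u and w.\<close>
definition rel_elt :: "(nat \<Rightarrow> nat) \<Rightarrow> nat \<Rightarrow> complex \<Rightarrow> word \<Rightarrow> letter \<Rightarrow> letter \<Rightarrow> word \<Rightarrow> lc" where
  "rel_elt q l k u x y w =
     (case x of (a, m) \<Rightarrow> case y of (b, n) \<Rightarrow>
       [(1, u @ [(a, m), (b, n)] @ w), (- sgn_gen a b, u @ [(b, n), (a, m)] @ w)]
       @ map (\<lambda>(c, g). (- c, u @ [(g, m + n)] @ w)) (brk a b)
       @ [(- (of_int m * (if m + n = 0 then 1 else 0) * kap q l k a b), u @ w)])"

text \<open>Jset is the kernel of the projection from the free algebra on the modes onto
  V = U(a-hat) / U(a-hat)(a[t] + C(K-1)): the span of the two-sided ideal of the
  supercommutation relations plus the left ideal generated by the non-negative modes.\<close>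
inductive_set Jset :: "(nat \<Rightarrow> nat) \<Rightarrow> nat \<Rightarrow> complex \<Rightarrow> (word \<Rightarrow> complex) set"
  for q :: "nat \<Rightarrow> nat" and l :: nat and k :: complex where
  J_zero: "(\<lambda>_. 0) \<in> Jset q l k"
| J_add: "x \<in> Jset q l k \<Longrightarrow> y \<in> Jset q l k \<Longrightarrow> (\<lambda>w. x w + y w) \<in> Jset q l k"
| J_smult: "x \<in> Jset q l k \<Longrightarrow> (\<lambda>w. c * x w) \<in> Jset q l k"
| J_rel: "valid_word q l u \<Longrightarrow> valid_word q l w \<Longrightarrow> valid_gen q l a \<Longrightarrow> valid_gen q l b
          \<Longrightarrow> vec_of (rel_elt q l k u (a, m) (b, n) w) \<in> Jset q l k"
| J_ann: "valid_word q l u \<Longrightarrow> valid_gen q l a \<Longrightarrow> 0 \<le> n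
          \<Longrightarrow> vec_of [(1, u @ [(a, n)])] \<in> Jset q l k"

definition zero_in_V :: "(nat \<Rightarrow> nat) \<Rightarrow> nat \<Rightarrow> complex \<Rightarrow> lc \<Rightarrow> bool" where
  "zero_in_V q l k L \<longleftrightarrow> vec_of L \<in> Jset q l k"

section \<open>n-th products (state-field correspondence via the Borcherds identity)\<close>

definition lmul :: "letter \<Rightarrow> lc \<Rightarrow> lc" where
  "lmul g L = map (\<lambda>(c, w). (c, g # w)) L"

definition scale :: "complex \<Rightarrow> lc \<Rightarrow> lc" where
  "scale c L = map (\<lambda>(d, w). (c * d, w)) L"

definition wt :: "word \<Rightarrow> int" where
  "wt w = - sum_list (map snd w)"

definition maxwt :: "lc \<Rightarrow> int" where
  "maxwt L = Max (insert 0 (set (map (\<lambda>(c, w). wt w) L)))"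

definition sgnw :: "gen \<Rightarrow> word \<Rightarrow> complex" where
  "sgnw a w = (if is_odd_gen a \<and> odd (length (filter (\<lambda>x. is_odd_gen (fst x)) w)) then -1 else 1)"

text \<open>nprod x n v computes (x|0>)_(n) v.  Recursively, using
  (a_(p) b)_(n) = sum_{j>=0} (-1)^j binom(p,j) (a_(p-j) b_(n+j) - (-1)^p (-1)^{|a||b|} b_(p+n-j) a_(j)),
  where for a = x[-1] one has a_(m) = x t^m.  The infinite sum is truncated at a bound
  beyond which all terms vanish in V for weight reasons.\<close>
fun nprod :: "word \<Rightarrow> int \<Rightarrow> lc \<Rightarrow> lc" where
  "nprod [] n v = (if n = -1 then v else [])"
| "nprod ((a, p) # w) n v =
     concat (map (\<lambda>j. scale ((-1) ^ j * ((of_int p :: complex) gchoose j))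
        (lmul (a, p - int j) (nprod w (n + int j) v)
         @ scale (- (if even p then 1 else -1) * sgnw a w) (nprod w (p + n - int j) (lmul (a, int j) v))))
       [0..<Suc (nat (maxwt v + wt w + abs n + abs p))])"

definition nprodL :: "lc \<Rightarrow> int \<Rightarrow> lc \<Rightarrow> lc" where
  "nprodL X n v = concat (map (\<lambda>(c, x). scale c (nprod x n v)) X)"

text \<open>d_0(e_ij[-1]).\<close>
definition d0_gen :: "(nat \<Rightarrow> nat) \<Rightarrow> nat \<Rightarrow> complex \<Rightarrow> nat \<Rightarrow> nat \<Rightarrow> lc" where
  "d0_gen q l k i j =
     [(1, [(E r j, -1), (Psi i r, -1)]). r \<leftarrow> idx q l, colq q r < colq q i \<and> colq q j \<le> colq q r]
     @ [(-1, [(Psi r j, -1), (E i r, -1)]). r \<leftarrow> idx q l, colq q j < colq q r \<and> colq q r \<le> colq q i]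
     @ (if colq q j < colq q i then [(alpha q l k (colq q i), [(Psi i j, -2)])] else [])
     @ (if has_hat q l i then [(1, [(Psi (hat q i) j, -1)])] else [])
     @ (if has_tilde q j then [(-1, [(Psi i (tilde q j), -1)])] else [])"

text \<open>d_0 on words in the e-modes (spanning V^kappa(b)), determined by d_0|0> = 0 and the
  derivation rule d_0(x_(p) y) = (d_0 x)_(p) y + x_(p) d_0 y for x = e_ij[-1],
  noting x_(p) = e_ij t^p.  (Words containing psi-letters never occur as arguments.)\<close>
fun d0w :: "(nat \<Rightarrow> nat) \<Rightarrow> nat \<Rightarrow> complex \<Rightarrow> word \<Rightarrow> lc" where
  "d0w q l k [] = []"
| "d0w q l k ((E i j, p) # w) = nprodL (d0_gen q l k i j) p [(1, w)] @ lmul (E i j, p) (d0w q l k w)"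
| "d0w q l k ((Psi i j, p) # w) = []"

definition d0 :: "(nat \<Rightarrow> nat) \<Rightarrow> nat \<Rightarrow> complex \<Rightarrow> lc \<Rightarrow> lc" where
  "d0 q l k L = concat (map (\<lambda>(c, w). scale c (d0w q l k w)) L)"

definition W1 :: "(nat \<Rightarrow> nat) \<Rightarrow> nat \<Rightarrow> nat \<Rightarrow> nat \<Rightarrow> lc" where
  "W1 q l p r = [(1, [(E i j, -1)]). i \<leftarrow> idx q l, j \<leftarrow> idx q l,
                   rowq q i = p \<and> rowq q j = r \<and> colq q i = colq q j]"

definition W2 :: "(nat \<Rightarrow> nat) \<Rightarrow> nat \<Rightarrow> complex \<Rightarrow> nat \<Rightarrow> nat \<Rightarrow> lc" where
  "W2 q l k p r =
     [(1, [(E i j, -1)]). i \<leftarrow> idx q l, j \<leftarrow> idx q l,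
        colq q i = colq q j + 1 \<and> rowq q i = p \<and> rowq q j = r]
   @ [(- gamma q l k (colq q i), [(E i j, -2)]). i \<leftarrow> idx q l, j \<leftarrow> idx q l,
        colq q i = colq q j \<and> rowq q i = p \<and> rowq q j = r]
   @ [(1, [(E u j, -1), (E i v, -1)]). u \<leftarrow> idx q l, j \<leftarrow> idx q l, i \<leftarrow> idx q l, v \<leftarrow> idx q l,
        colq q u = colq q j \<and> colq q j < colq q i \<and> colq q i = colq q v
        \<and> rowq q u = rowq q v \<and> rowq q v \<le> q l \<and> rowq q i = p \<and> rowq q j = r]
   @ [(-1, [(E u j, -1), (E i v, -1)]). u \<leftarrow> idx q l, j \<leftarrow> idx q l, i \<leftarrow> idx q l, v \<leftarrow> idx q l,
        colq q u = colq q j \<and> colq q i \<le> colq q j \<and> colq q i = colq q v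
        \<and> q l < rowq q v \<and> rowq q u = rowq q v \<and> rowq q i = p \<and> rowq q j = r]"

definition in_Walg :: "(nat \<Rightarrow> nat) \<Rightarrow> nat \<Rightarrow> complex \<Rightarrow> lc \<Rightarrow> bool" where
  "in_Walg q l k X \<longleftrightarrow> zero_in_V q l k (d0 q l k X)"

end

theory Submission
  imports Defs
begin

text \<open>
  In pyramid coordinates (column, row), the value of d0 on a generator e_ij[-1] with
  col i = col j consists only of the shift terms psi_(hat i, j) - psi_(i, tilde j), and on a product
  of two such generators the derivation rule yields normally ordered words, with no reordering.
  Hence d0 W1 is a sum over the columns that telescopes to zero, because a row present in some
  column is present in every column to its left.

  For W2, the linear terms e_ij[-1] with col i = col j + 1 contribute through the quadratic part of
  d0 the products psi e and e psi; applied to the vacuum these agree with the normally ordered words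
  up to terms ending in a non-negative mode, which lie in the kernel Jset. Collecting coefficients, the
  psi[-2] terms cancel since gamma_c - gamma_(c+1) = alpha_(c+1), the single psi terms telescope,
  and each quadratic word gets one contribution from the linear terms, which cancels against the
  telescoped contributions of the quadratic terms of W2, split according to whether their common
  row is at most q_l or not.
\<close>

section \<open>Linear combinations of words modulo the kernel\<close>

lemma vec_of_Nil [simp]: "vec_of [] w = 0"
  by (simp add: vec_of_def)

lemma vec_of_Cons [simp]: "vec_of ((c, u) # L) w = (if u = w then c else 0) + vec_of L w"
  by (simp add: vec_of_def)

lemma vec_of_append [simp]: "vec_of (A @ B) w = vec_of A w + vec_of B w"
  by (simp add: vec_of_def)

lemma vec_of_scale [simp]: "vec_of (scale c L) w = c * vec_of L w"
  by (induction L) (auto simp: scale_def algebra_simps)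

definition word_delta :: "word \<Rightarrow> word \<Rightarrow> complex" where
  "word_delta u w = (if u = w then 1 else 0)"

lemma vec_of_eq_sum_word_delta: "vec_of L w = sum_list (map (\<lambda>(c, u). c * word_delta u w) L)"
  by (induction L) (auto simp: word_delta_def)

lemma vec_of_comprehension:
  "vec_of [(a r, u r). r \<leftarrow> xs, P r] w = sum_list (map (\<lambda>r. if P r then a r * word_delta (u r) w else 0) xs)"
  by (induction xs) (auto simp: word_delta_def)

lemma vec_of_nprodL: "vec_of (nprodL X n v) w = sum_list (map (\<lambda>(c, x). c * vec_of (nprod x n v) w) X)"
  by (induction X) (auto simp: nprodL_def)

lemma vec_of_d0: "vec_of (d0 q l k L) w = sum_list (map (\<lambda>(c, u). c * vec_of (d0w q l k u) w) L)"
  by (induction L) (auto simp: d0_def)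

context
  fixes q :: "nat \<Rightarrow> nat" and l :: nat and k :: complex
begin

lemma Jset_eqI: "x \<in> Jset q l k \<Longrightarrow> (\<And>w. y w = x w) \<Longrightarrow> y \<in> Jset q l k"
  by (metis ext)

lemma Jset_sum_list:
  "(\<And>a. a \<in> set xs \<Longrightarrow> f a \<in> Jset q l k) \<Longrightarrow> (\<lambda>w. sum_list (map (\<lambda>a. f a w) xs)) \<in> Jset q l k"
proof (induction xs)
  case Nil
  then show ?case using Jset.J_zero by simp
next
  case (Cons a xs)
  then have "(\<lambda>w. f a w + sum_list (map (\<lambda>a. f a w) xs)) \<in> Jset q l k"
    by (intro Jset.J_add) auto
  then show ?case by simp
qed

lemma Jset_sum:
  assumes "finite A" "\<And>a. a \<in> A \<Longrightarrow> f a \<in> Jset q l k"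
  shows "(\<lambda>w. \<Sum>a\<in>A. f a w) \<in> Jset q l k"
  using assms
proof (induction A rule: finite_induct)
  case empty
  then show ?case using Jset.J_zero by simp
next
  case (insert a A)
  then have "(\<lambda>w. f a w + (\<Sum>a\<in>A. f a w)) \<in> Jset q l k"
    by (intro Jset.J_add) auto
  with insert show ?case by simp
qed

lemma vec_of_annihilated_in_Jset:
  assumes "\<forall>(c, w) \<in> set L. \<exists>u g m. w = u @ [(g, m)] \<and> valid_word q l u \<and> valid_gen q l g \<and> 0 \<le> m"
  shows "vec_of L \<in> Jset q l k"
  using assms
proof (induction L)
  case Nil
  then show ?case using Jset.J_zero by (simp add: vec_of_def)
next
  case (Cons a L)
  obtain c u g m where a: "a = (c, u @ [(g, m)])" and ann: "valid_word q l u" "valid_gen q l g" "0 \<le> m"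
    using Cons.prems by fastforce
  have "(\<lambda>w. c * vec_of [(1, u @ [(g, m)])] w + vec_of L w) \<in> Jset q l k"
    using Cons ann by (intro Jset.J_add Jset.J_smult Jset.J_ann) auto
  then show ?case
    by (rule Jset_eqI) (simp add: a)
qed

end

section \<open>Products with the vacuum\<close>

lemma nprod_letter_vacuum: "nprod [(g, -1)] (-1) [(1, [])] = [(1, [(g, -1)])]"
  by (simp add: maxwt_def wt_def lmul_def scale_def sgnw_def upt_rec gbinomial_Suc)

lemma nprod_letter_vacuum_minus2: "nprod [(g, -1)] (-2) [(1, [])] = [(1, [(g, -2)])]"
  by (simp add: maxwt_def wt_def lmul_def scale_def sgnw_def upt_rec gbinomial_Suc)

lemma nprod_deriv_letter_vacuum: "nprod [(g, -2)] (-1) [(1, [])] = [(1, [(g, -2)])]"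
  by (simp add: maxwt_def wt_def lmul_def scale_def sgnw_def upt_rec gbinomial_Suc)

lemma nprod_letter_letter: "nprod [(g, -1)] (-1) [(1, [(e, -1)])] = [(1, [(g, -1), (e, -1)])]"
  by (simp add: maxwt_def wt_def lmul_def scale_def sgnw_def upt_rec gbinomial_Suc)

lemma nprod_pair_vacuum:
  "nprod [(a, -1), (b, -1)] (-1) [(1, [])] = (1, [(a, -1), (b, -1)]) #
     [(sgn_gen a b, [(b, -2), (a, 0)]), (1, [(a, -2), (b, 0)]),
      (sgn_gen a b, [(b, -3), (a, 1)]), (1, [(a, -3), (b, 1)]),
      (sgn_gen a b, [(b, -4), (a, 2)]), (1, [(a, -4), (b, 2)]),
      (sgn_gen a b, [(b, -5), (a, 3)])]"
  by (simp add: maxwt_def wt_def lmul_def scale_def sgnw_def upt_rec gbinomial_Suc sgn_gen_def)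

text \<open>All correction terms end in a non-negative mode, so they vanish in the vertex algebra.\<close>
lemma nprod_pair_vacuum_equiv:
  assumes "valid_gen q l a" "valid_gen q l b"
  shows "(\<lambda>w. vec_of (nprod [(a, -1), (b, -1)] (-1) [(1, [])]) w - vec_of [(1, [(a, -1), (b, -1)])] w)
           \<in> Jset q l k"
proof -
  have "vec_of [(sgn_gen a b, [(b, -2), (a, 0)]), (1, [(a, -2), (b, 0)]),
      (sgn_gen a b, [(b, -3), (a, 1)]), (1, [(a, -3), (b, 1)]),
      (sgn_gen a b, [(b, -4), (a, 2)]), (1, [(a, -4), (b, 2)]),
      (sgn_gen a b, [(b, -5), (a, 3)])] \<in> Jset q l k"
    using assms by (intro vec_of_annihilated_in_Jset) (simp add: valid_word_def)
  then show ?thesis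
    by (rule Jset_eqI) (simp only: nprod_pair_vacuum vec_of_Cons vec_of_Nil, simp)
qed

section \<open>Pyramid coordinates\<close>

definition cell_index :: "(nat \<Rightarrow> nat) \<Rightarrow> nat \<Rightarrow> nat \<Rightarrow> nat" where
  "cell_index q c s = psum q (c - 1) + s"

lemma psum_0 [simp]: "psum q 0 = 0"
  by (simp add: psum_def)

lemma psum_Suc [simp]: "psum q (Suc n) = psum q n + q (Suc n)"
  by (simp add: psum_def)

lemma psum_mono: "m \<le> n \<Longrightarrow> psum q m \<le> psum q n"
  by (induction n) (auto simp: le_Suc_eq)

lemma psum_eq_pred: "0 < c \<Longrightarrow> psum q c = psum q (c - 1) + q c"
  by (cases c) auto

context
  fixes q :: "nat \<Rightarrow> nat" and c s :: nat
  assumes cell: "0 < c" "0 < s" "s \<le> q c"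
begin

lemma colq_cell_index [simp]: "colq q (cell_index q c s) = c"
  unfolding colq_def
proof (rule Least_equality)
  show "cell_index q c s \<le> psum q c"
    using cell psum_eq_pred[of c q] by (simp add: cell_index_def)
next
  fix y
  assume y: "cell_index q c s \<le> psum q y"
  show "c \<le> y"
  proof (rule ccontr)
    assume "\<not> c \<le> y"
    then have "psum q y \<le> psum q (c - 1)" by (intro psum_mono) auto
    then show False using y cell by (simp add: cell_index_def)
  qed
qed

lemma rowq_cell_index [simp]: "rowq q (cell_index q c s) = s"
  unfolding rowq_def colq_cell_index by (simp add: cell_index_def)

lemma hat_cell_index [simp]: "hat q (cell_index q c s) = cell_index q (c + 1) s"
  unfolding hat_def colq_cell_index rowq_cell_index by (simp add: cell_index_def)

lemma tilde_cell_index [simp]: "1 < c \<Longrightarrow> tilde q (cell_index q c s) = cell_index q (c - 1) s"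
  unfolding tilde_def colq_cell_index rowq_cell_index by (simp add: cell_index_def numeral_2_eq_2)

lemma has_hat_cell_index [simp]: "has_hat q l (cell_index q c s) \<longleftrightarrow> c < l \<and> s \<le> q (c + 1)"
  by (simp add: has_hat_def)

lemma has_tilde_cell_index [simp]: "has_tilde q (cell_index q c s) \<longleftrightarrow> 1 < c"
  by (simp add: has_tilde_def)

end

lemma cell_index_bounds:
  assumes "0 < c" "c \<le> l" "0 < s" "s \<le> q c"
  shows "0 < cell_index q c s" "cell_index q c s \<le> Nq q l"
proof -
  show "0 < cell_index q c s" using assms by (simp add: cell_index_def)
  have "cell_index q c s \<le> psum q c" using assms psum_eq_pred[of c q] by (simp add: cell_index_def)
  also have "\<dots> \<le> psum q l" using assms by (intro psum_mono)
  finally show "cell_index q c s \<le> Nq q l" by (simp add: Nq_def)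
qed

lemma colq_rowq_bounds:
  assumes "0 < i" "i \<le> Nq q l"
  shows "0 < colq q i" "colq q i \<le> l" "0 < rowq q i" "rowq q i \<le> q (colq q i)"
    and cell_index_colq_rowq: "cell_index q (colq q i) (rowq q i) = i"
proof -
  have ex: "i \<le> psum q l" using assms by (simp add: Nq_def)
  have le: "i \<le> psum q (colq q i)" unfolding colq_def by (rule LeastI[of _ l]) (rule ex)
  show "colq q i \<le> l" unfolding colq_def by (rule Least_le) (rule ex)
  show c0: "0 < colq q i"
    using le assms by (cases "colq q i") auto
  have gt: "\<not> i \<le> psum q (colq q i - 1)"
    using c0 by (metis colq_def diff_less not_less_Least zero_less_one)
  show "0 < rowq q i" using gt by (simp add: rowq_def)
  show "rowq q i \<le> q (colq q i)" using le gt psum_eq_pred[OF c0, of q] by (simp add: rowq_def)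
  show "cell_index q (colq q i) (rowq q i) = i" using gt by (simp add: rowq_def cell_index_def)
qed

lemma bij_cell_index: "bij_betw (\<lambda>(c, s). cell_index q c s) (SIGMA c:{1..l}. {1..q c}) {1..Nq q l}"
proof (rule bij_betw_byWitness[where f' = "\<lambda>i. (colq q i, rowq q i)"])
  show "\<forall>a\<in>SIGMA c:{1..l}. {1..q c}.
      (colq q ((\<lambda>(c, s). cell_index q c s) a), rowq q ((\<lambda>(c, s). cell_index q c s) a)) = a"
    by auto
  show "\<forall>i\<in>{1..Nq q l}. (\<lambda>(c, s). cell_index q c s) (colq q i, rowq q i) = i"
    by (auto simp: cell_index_colq_rowq)
  show "(\<lambda>(c, s). cell_index q c s) ` (SIGMA c:{1..l}. {1..q c}) \<subseteq> {1..Nq q l}"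
    by (clarsimp simp: Suc_le_eq cell_index_bounds)
  show "(\<lambda>i. (colq q i, rowq q i)) ` {1..Nq q l} \<subseteq> (SIGMA c:{1..l}. {1..q c})"
    by (auto simp: Suc_le_eq colq_rowq_bounds)
qed

lemma sum_list_idx:
  "sum_list (map (F :: nat \<Rightarrow> 'a::comm_monoid_add) (idx q l)) = (\<Sum>c=1..l. \<Sum>s=1..q c. F (cell_index q c s))"
proof -
  have "sum_list (map F (idx q l)) = sum F (set (idx q l))"
    unfolding idx_def by (rule sum_set_upt_conv_sum_list_nat[symmetric])
  also have "set (idx q l) = {1..Nq q l}"
    by (auto simp: idx_def)
  finally have "sum_list (map F (idx q l)) = sum F {1..Nq q l}" .
  also have "\<dots> = (\<Sum>x\<in>(SIGMA c:{1..l}. {1..q c}). F ((\<lambda>(c, s). cell_index q c s) x))"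
    by (rule sum.reindex_bij_betw[OF bij_cell_index, symmetric])
  also have "\<dots> = (\<Sum>c=1..l. \<Sum>s=1..q c. F (cell_index q c s))"
    by (simp add: sum.Sigma split_def)
  finally show ?thesis .
qed

lemma sum_list_idx_cong:
  assumes "\<And>c s. 0 < c \<Longrightarrow> c \<le> l \<Longrightarrow> 0 < s \<Longrightarrow> s \<le> q c \<Longrightarrow> F (cell_index q c s) = G c s"
  shows "sum_list (map F (idx q l)) = (\<Sum>c=1..l. \<Sum>s=1..q c. G c s)"
  unfolding sum_list_idx by (intro sum.cong refl) (use assms in auto)

lemma set_idx: "r \<in> set (idx q l) \<longleftrightarrow> 0 < r \<and> r \<le> Nq q l"
  by (auto simp: idx_def)

lemma sum_list_idx_delta:
  "sum_list (map (\<lambda>j. if colq q j = c \<and> rowq q j = s then F j else (0::'a::comm_monoid_add)) (idx q l))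
     = (if 0 < c \<and> c \<le> l \<and> 0 < s \<and> s \<le> q c then F (cell_index q c s) else 0)"
proof -
  have "sum_list (map (\<lambda>j. if colq q j = c \<and> rowq q j = s then F j else 0) (idx q l))
      = (\<Sum>c'=1..l. \<Sum>s'=1..q c'. if c' = c \<and> s' = s then F (cell_index q c' s') else 0)"
    by (rule sum_list_idx_cong) auto
  also have "\<dots> = (\<Sum>c'=1..l. if c' = c then \<Sum>s'=1..q c'. if s' = s then F (cell_index q c' s') else 0 else 0)"
    by (intro sum.cong refl) auto
  finally show ?thesis
    by (simp add: sum.delta)
qed

lemma sum_list_idx_column:
  "sum_list (map (\<lambda>j. if colq q j = c then F j else (0::'a::comm_monoid_add)) (idx q l))
     = (if 0 < c \<and> c \<le> l then \<Sum>s=1..q c. F (cell_index q c s) else 0)"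
proof -
  have "sum_list (map (\<lambda>j. if colq q j = c then F j else 0) (idx q l))
      = (\<Sum>c'=1..l. \<Sum>s=1..q c'. if c' = c then F (cell_index q c' s) else 0)"
    by (rule sum_list_idx_cong) auto
  also have "\<dots> = (\<Sum>c'=1..l. if c' = c then \<Sum>s=1..q c'. F (cell_index q c' s) else 0)"
    by (intro sum.cong refl) auto
  finally show ?thesis
    by (simp add: sum.delta)
qed

lemma sum_list_idx_pairs:
  assumes "0 < p" "0 < r"
  shows "sum_list (map (\<lambda>i. sum_list (map (\<lambda>j.
           if colq q i = colq q j + d \<and> rowq q i = p \<and> rowq q j = r then V i j else (0::'a::comm_monoid_add))
           (idx q l))) (idx q l))
       = (\<Sum>c=1..l. if d < c \<and> p \<le> q c \<and> r \<le> q (c - d)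
                     then V (cell_index q c p) (cell_index q (c - d) r) else 0)"
proof -
  have "sum_list (map (\<lambda>i. sum_list (map (\<lambda>j.
           if colq q i = colq q j + d \<and> rowq q i = p \<and> rowq q j = r then V i j else 0) (idx q l))) (idx q l))
      = (\<Sum>c=1..l. \<Sum>s=1..q c. if s = p then
           (if d < c \<and> r \<le> q (c - d) then V (cell_index q c s) (cell_index q (c - d) r) else 0) else 0)"
  proof (rule sum_list_idx_cong)
    fix c s
    assume cs: "0 < c" "c \<le> l" "0 < s" "s \<le> q c"
    have eq: "map (\<lambda>j. if colq q (cell_index q c s) = colq q j + d \<and> rowq q (cell_index q c s) = p \<and> rowq q j = r
                     then V (cell_index q c s) j else 0) (idx q l)
        = map (\<lambda>j. if colq q j = c - d \<and> rowq q j = r then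
                 (if s = p \<and> d < c then V (cell_index q c s) j else 0) else 0) (idx q l)"
      using cs colq_rowq_bounds(1)[of _ q l] by (intro map_cong refl) (force simp: set_idx)
    show "sum_list (map (\<lambda>j. if colq q (cell_index q c s) = colq q j + d \<and> rowq q (cell_index q c s) = p
                                   \<and> rowq q j = r then V (cell_index q c s) j else 0) (idx q l))
        = (if s = p then (if d < c \<and> r \<le> q (c - d) then V (cell_index q c s) (cell_index q (c - d) r) else 0)
           else 0)"
      unfolding eq using cs assms by (auto simp: sum_list_idx_delta)
  qed
  also have "\<dots> = (\<Sum>c=1..l. if d < c \<and> p \<le> q c \<and> r \<le> q (c - d)
                     then V (cell_index q c p) (cell_index q (c - d) r) else 0)"
    using assms by (intro sum.cong refl) (auto simp: sum.delta)
  finally show ?thesis .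
qed

lemma sum_list_idx_quadruples:
  fixes F :: "nat \<Rightarrow> nat \<Rightarrow> nat \<Rightarrow> nat \<Rightarrow> 'a::comm_monoid_add"
  assumes "0 < p" "0 < r" "\<And>c. 0 < c \<Longrightarrow> c \<le> l \<Longrightarrow> p \<le> q c" "\<And>c. 0 < c \<Longrightarrow> c \<le> l \<Longrightarrow> r \<le> q c"
  shows "sum_list (map (\<lambda>u. sum_list (map (\<lambda>j. sum_list (map (\<lambda>i. sum_list (map (\<lambda>v.
           if colq q u = colq q j \<and> rowq q j = r \<and> S (rowq q u) \<and> R (colq q j) (colq q i) \<and> rowq q i = p
              \<and> colq q i = colq q v \<and> rowq q u = rowq q v then F u j i v else 0)
           (idx q l))) (idx q l))) (idx q l))) (idx q l))
       = (\<Sum>c=1..l. \<Sum>s=1..q c. \<Sum>c'=1..l. if S s \<and> R c c' \<and> s \<le> q c'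
            then F (cell_index q c s) (cell_index q c r) (cell_index q c' p) (cell_index q c' s) else 0)"
proof -
  have split: "(if A \<and> B then X else 0) = (if A then if B then X else 0 else (0::'a))" for A B X
    by simp
  have pull: "(\<Sum>x\<in>A. if P then f x else 0) = (if P then \<Sum>x\<in>A. f x else (0::'a))" for A P f
    by simp
  show ?thesis
    unfolding sum_list_idx using assms by (simp add: split pull cong: if_cong)
qed

lemma sum_list_concat: "sum_list (concat xss) = sum_list (map sum_list xss)"
  by (induction xss) auto

lemma sum_list_comprehension2:
  "sum_list (map (\<lambda>(c, u). c * F u) [(a i j, w i j). i \<leftarrow> xs, j \<leftarrow> ys, P i j])
   = sum_list (map (\<lambda>i. sum_list (map (\<lambda>j. if P i j then a i j * F (w i j) else 0) ys)) xs)"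
  by (induction xs)
    (simp_all add: sum_list_concat map_concat comp_def if_distrib[of "map _"] if_distrib[of sum_list] cong: if_cong)

lemma sum_list_comprehension4:
  "sum_list (map (\<lambda>(c, u). c * F u)
      [(a i j m n, w i j m n). i \<leftarrow> xs, j \<leftarrow> ys, m \<leftarrow> zs, n \<leftarrow> ts, P i j m n])
   = sum_list (map (\<lambda>i. sum_list (map (\<lambda>j. sum_list (map (\<lambda>m. sum_list (map (\<lambda>n.
        if P i j m n then a i j m n * F (w i j m n) else 0) ts)) zs)) ys)) xs)"
  by (simp add: sum_list_concat map_concat comp_def if_distrib[of "map _"] if_distrib[of sum_list] cong: if_cong)

lemma antimono_of_Suc_le:
  fixes q :: "nat \<Rightarrow> nat"
  assumes "\<forall>s. 1 \<le> s \<and> s < l \<longrightarrow> q (Suc s) \<le> q s" "0 < a" "a \<le> b" "b \<le> l"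
  shows "q b \<le> q a"
  using assms(3,4)
proof (induction b rule: dec_induct)
  case (step b)
  then show ?case
    using assms(1,2) le_trans[of "q (Suc b)" "q b" "q a"] by simp
qed simp

section \<open>The map d0 on generators within a column\<close>

lemma d0_append: "d0 q l k (A @ B) = d0 q l k A @ d0 q l k B"
  by (simp add: d0_def)

lemma d0_gen_same_column:
  assumes "colq q i = colq q j"
  shows "d0_gen q l k i j = (if has_hat q l i then [(1, [(Psi (hat q i) j, -1)])] else [])
     @ (if has_tilde q j then [(-1, [(Psi i (tilde q j), -1)])] else [])"
  using assms by (auto simp: d0_gen_def)

lemma vec_of_d0w_same_column:
  assumes "colq q i = colq q j"
  shows "vec_of (d0w q l k [(E i j, -1)]) x =
    (if has_hat q l i then word_delta [(Psi (hat q i) j, -1)] x else 0)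
    - (if has_tilde q j then word_delta [(Psi i (tilde q j), -1)] x else 0)"
  by (simp add: d0_gen_same_column[OF assms] vec_of_nprodL nprod_letter_vacuum lmul_def word_delta_def
      del: nprod.simps)

lemma vec_of_d0w_same_column_deriv:
  assumes "colq q i = colq q j"
  shows "vec_of (d0w q l k [(E i j, -2)]) x =
    (if has_hat q l i then word_delta [(Psi (hat q i) j, -2)] x else 0)
    - (if has_tilde q j then word_delta [(Psi i (tilde q j), -2)] x else 0)"
  by (simp add: d0_gen_same_column[OF assms] vec_of_nprodL nprod_letter_vacuum_minus2 lmul_def word_delta_def
      del: nprod.simps)

lemma vec_of_d0w_pair_same_columns:
  assumes "colq q u = colq q j" "colq q i = colq q v"
  shows "vec_of (d0w q l k [(E u j, -1), (E i v, -1)]) x =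
    (if has_hat q l u then word_delta [(Psi (hat q u) j, -1), (E i v, -1)] x else 0)
    - (if has_tilde q j then word_delta [(Psi u (tilde q j), -1), (E i v, -1)] x else 0)
    + (if has_hat q l i then word_delta [(E u j, -1), (Psi (hat q i) v, -1)] x else 0)
    - (if has_tilde q v then word_delta [(E u j, -1), (Psi i (tilde q v), -1)] x else 0)"
  by (simp add: d0_gen_same_column[OF assms(1)] d0_gen_same_column[OF assms(2)] nprodL_def scale_def
      nprod_letter_vacuum nprod_letter_letter lmul_def word_delta_def del: nprod.simps)

lemma d0_gen_term_equiv:
  assumes "0 < i" "i \<le> Nq q l" "0 < j" "j \<le> Nq q l" and "(c, y) \<in> set (d0_gen q l k i j)"
  shows "(\<lambda>x. vec_of (nprod y (-1) [(1, [])]) x - vec_of [(1, y)] x) \<in> Jset q l k"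
proof -
  from assms(5) consider
    (EPsi) r where "0 < r" "r \<le> Nq q l" "colq q r < colq q i" "colq q j \<le> colq q r"
      "y = [(E r j, -1), (Psi i r, -1)]"
  | (PsiE) r where "0 < r" "r \<le> Nq q l" "colq q j < colq q r" "colq q r \<le> colq q i"
      "y = [(Psi r j, -1), (E i r, -1)]"
  | (deriv) g where "y = [(g, -2)]"
  | (letter) g where "y = [(g, -1)]"
    unfolding d0_gen_def by (auto simp: set_idx split: if_splits)
  then show ?thesis
  proof cases
    case EPsi
    then show ?thesis using assms by (simp only:) (rule nprod_pair_vacuum_equiv; simp)
  next
    case PsiE
    then show ?thesis using assms by (simp only:) (rule nprod_pair_vacuum_equiv; simp)
  next
    case deriv
    then show ?thesis using Jset.J_zero by (simp add: nprod_deriv_letter_vacuum del: nprod.simps)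
  next
    case letter
    then show ?thesis using Jset.J_zero by (simp add: nprod_letter_vacuum del: nprod.simps)
  qed
qed

lemma vec_of_d0w_letter_equiv:
  assumes "0 < i" "i \<le> Nq q l" "0 < j" "j \<le> Nq q l"
  shows "(\<lambda>x. vec_of (d0w q l k [(E i j, -1)]) x - vec_of (d0_gen q l k i j) x) \<in> Jset q l k"
proof -
  have "(\<lambda>x. sum_list (map (\<lambda>a. (\<lambda>(c, y) x. c * (vec_of (nprod y (-1) [(1, [])]) x - vec_of [(1, y)] x)) a x)
      (d0_gen q l k i j))) \<in> Jset q l k"
  proof (rule Jset_sum_list)
    fix a
    assume a: "a \<in> set (d0_gen q l k i j)"
    obtain c y where "a = (c, y)" by fastforce
    with a show "(\<lambda>(c, y) x. c * (vec_of (nprod y (-1) [(1, [])]) x - vec_of [(1, y)] x)) a \<in> Jset q l k"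
      by (simp del: vec_of_Cons vec_of_Nil add: Jset.J_smult d0_gen_term_equiv[OF assms])
  qed
  then show ?thesis
    by (rule Jset_eqI) (simp add: vec_of_nprodL lmul_def vec_of_eq_sum_word_delta[of "d0_gen q l k i j"]
        word_delta_def sum_list_subtractf split_def algebra_simps del: nprod.simps)
qed

section \<open>Telescoping sums over columns\<close>

lemma sum_shift_restrict:
  "(\<Sum>c=1..(n::nat). if 1 < c then g (c - 1) else 0) = (\<Sum>c\<in>{1..<n}. g c :: 'a::comm_monoid_add)"
proof (induction n)
  case (Suc n)
  then show ?case
    by (cases "n = 0") (simp_all add: sum.cl_ivl_Suc sum.op_ivl_Suc)
qed simp

lemma sum_lt_restrict:
  "(\<Sum>c=1..(n::nat). if c < n then g c else 0) = (\<Sum>c\<in>{1..<n}. g c :: 'a::comm_monoid_add)"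
proof -
  have "(\<Sum>c=1..n. if c < n then g c else 0) = (\<Sum>c\<in>{1..n} \<inter> {c. c < n}. g c)"
    by (simp add: sum.inter_restrict)
  also have "{1..n} \<inter> {c. c < n} = {1..<n}"
    by auto
  finally show ?thesis .
qed

lemma sum_le_restrict:
  fixes n N :: nat
  assumes "n \<le> N"
  shows "(\<Sum>s=1..n. G s) = (\<Sum>s=1..N. if s \<le> n then G s else (0::'a::comm_monoid_add))"
proof -
  have "(\<Sum>s=1..N. if s \<le> n then G s else 0) = (\<Sum>s\<in>{1..N} \<inter> {s. s \<le> n}. G s)"
    by (simp add: sum.inter_restrict)
  also have "{1..N} \<inter> {s. s \<le> n} = {1..n}"
    using assms by auto
  finally show ?thesis ..
qed

lemma sum_telescope_shift:
  "(\<Sum>c=1..(n::nat). (if c < n then g c else 0) - (if 1 < c then g (c - 1) else 0)) = (0::'a::ab_group_add)"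
  by (simp only: sum_subtractf sum_lt_restrict sum_shift_restrict) simp

lemma vec_of_d0_W1:
  assumes antimono: "\<And>a b. 0 < a \<Longrightarrow> a \<le> b \<Longrightarrow> b \<le> l \<Longrightarrow> q b \<le> q a"
    and pr: "(0 < p \<and> p \<le> q l \<and> 0 < r \<and> r \<le> q l) \<or> (q l < p \<and> p = r)"
  shows "vec_of (d0 q l k (W1 q l p r)) x = 0"
proof -
  have p: "0 < p" and r: "0 < r" using pr by auto
  define A where "A c \<longleftrightarrow> p \<le> q c \<and> r \<le> q c" for c
  define f where "f c = word_delta [(Psi (cell_index q (c + 1) p) (cell_index q c r), -1)] x" for c
  have A_step: "A c \<and> p \<le> q (c + 1) \<longleftrightarrow> A (c + 1)" if "0 < c" "c < l" for c
    using pr antimono[of c "c + 1"] antimono[of "c + 1" l] that by (auto simp: A_def)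
  have "vec_of (d0 q l k (W1 q l p r)) x =
      sum_list (map (\<lambda>i. sum_list (map (\<lambda>j. if colq q i = colq q j + 0 \<and> rowq q i = p \<and> rowq q j = r
       then (if has_hat q l i then word_delta [(Psi (hat q i) j, -1)] x else 0)
          - (if has_tilde q j then word_delta [(Psi i (tilde q j), -1)] x else 0) else 0) (idx q l))) (idx q l))"
    unfolding vec_of_d0 W1_def sum_list_comprehension2
    by (simp add: vec_of_d0w_same_column conj_ac del: d0w.simps cong: if_cong)
  also have "\<dots> = (\<Sum>c=1..l. if A c then
       (if c < l \<and> p \<le> q (c + 1) then f c else 0) - (if 1 < c then f (c - 1) else 0) else 0)"
    unfolding sum_list_idx_pairs[OF p r]
    using p r by (intro sum.cong refl) (auto simp: A_def f_def Suc_le_eq)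
  also have "\<dots> = (\<Sum>c=1..l. (if c < l then (if A (c + 1) then f c else 0) else 0)
        - (if 1 < c then (if A (c - 1 + 1) then f (c - 1) else 0) else 0))"
  proof (rule sum.cong[OF refl])
    fix c
    assume "c \<in> {1..l}"
    then show "(if A c then (if c < l \<and> p \<le> q (c + 1) then f c else 0) - (if 1 < c then f (c - 1) else 0) else 0)
      = (if c < l then (if A (c + 1) then f c else 0) else 0)
        - (if 1 < c then (if A (c - 1 + 1) then f (c - 1) else 0) else 0)"
      using A_step[of c] by auto
  qed
  also have "\<dots> = 0"
    by (rule sum_telescope_shift)
  finally show ?thesis .
qed

section \<open>Telescoping identities for the coefficients of d0 W2\<close>

lemma sum_telescope_between:
  fixes F :: "nat \<Rightarrow> 'a::ab_group_add"
  assumes "0 < a" "a \<le> b" "b \<le> Suc l"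
  shows "(\<Sum>c=1..l. if a \<le> c \<and> c < b then F (Suc c) - F c else 0) = F b - F a"
proof -
  have "(\<Sum>c=1..l. if a \<le> c \<and> c < b then F (Suc c) - F c else 0)
      = (\<Sum>c\<in>{1..l} \<inter> {c. a \<le> c \<and> c < b}. F (Suc c) - F c)"
    by (simp add: sum.inter_restrict)
  also have "{1..l} \<inter> {c. a \<le> c \<and> c < b} = {a..<b}"
    using assms by auto
  finally show ?thesis
    using sum_Suc_diff'[OF assms(2)] by simp
qed

lemma sum_telescope_below:
  fixes g :: "nat \<Rightarrow> 'a::ab_group_add"
  assumes "0 < b" "b \<le> l"
  shows "(\<Sum>c=1..l. if c < b then g (c + 1) - (if 1 < c then g c else 0) else 0) = (if 1 < b then g b else 0)"
proof -
  define F where "F c = (if 1 < c then g c else 0)" for c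
  have "(\<Sum>c=1..l. if c < b then g (c + 1) - (if 1 < c then g c else 0) else 0)
      = (\<Sum>c=1..l. if 1 \<le> c \<and> c < b then F (Suc c) - F c else 0)"
    by (intro sum.cong) (auto simp: F_def)
  also have "\<dots> = F b - F 1"
    using assms by (intro sum_telescope_between) auto
  finally show ?thesis
    by (simp add: F_def)
qed

lemma sum_telescope_above:
  fixes h :: "nat \<Rightarrow> 'a::ab_group_add"
  assumes "c \<le> l"
  shows "(\<Sum>c'=1..l. if c < c' then (if c' < l then h (c' + 1) else 0) - h c' else 0)
       = - (if c < l then h (c + 1) else 0)"
proof -
  define F where "F c' = (if c' \<le> l then h c' else 0)" for c'
  have "(\<Sum>c'=1..l. if c < c' then (if c' < l then h (c' + 1) else 0) - h c' else 0)
      = (\<Sum>c'=1..l. if c + 1 \<le> c' \<and> c' < Suc l then F (Suc c') - F c' else 0)"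
    by (intro sum.cong) (auto simp: F_def)
  also have "\<dots> = F (Suc l) - F (c + 1)"
    using assms by (intro sum_telescope_between) auto
  finally show ?thesis
    by (simp add: F_def)
qed

lemma sum_telescope_upto:
  fixes h :: "nat \<Rightarrow> 'a::ab_group_add"
  assumes "c \<le> l"
  shows "(\<Sum>c'=1..l. if c' \<le> c then (if c' < l then h (c' + 1) else 0) - (if 1 < c' then h c' else 0) else 0)
       = (if 0 < c \<and> c < l then h (c + 1) else 0)"
proof -
  define F where "F c' = (if 1 < c' \<and> c' \<le> l then h c' else 0)" for c'
  have "(\<Sum>c'=1..l. if c' \<le> c then (if c' < l then h (c' + 1) else 0) - (if 1 < c' then h c' else 0) else 0)
      = (\<Sum>c'=1..l. if 1 \<le> c' \<and> c' < c + 1 then F (Suc c') - F c' else 0)"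
    by (intro sum.cong) (auto simp: F_def)
  also have "\<dots> = F (c + 1) - F 1"
    using assms by (intro sum_telescope_between) auto
  finally show ?thesis
    by (auto simp: F_def)
qed

lemma sum_telescope_above_downclosed:
  fixes g :: "nat \<Rightarrow> 'a::ab_group_add"
  assumes down: "\<And>c. 0 < c \<Longrightarrow> c < l \<Longrightarrow> P (c + 1) \<Longrightarrow> P c" and a: "0 < a" "a \<le> l"
  shows "(\<Sum>c=1..l. if P c \<and> a \<le> c then (if c < l \<and> P (c + 1) then g (c + 1) else 0) - (if 1 < c then g c else 0)
                    else 0)
       = - (if P a \<and> 1 < a then g a else 0)"
proof -
  define F where "F c = (if P c \<and> 1 < c \<and> c \<le> l then g c else 0)" for c
  have "(\<Sum>c=1..l. if P c \<and> a \<le> c then (if c < l \<and> P (c + 1) then g (c + 1) else 0) - (if 1 < c then g c else 0)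
                   else 0)
      = (\<Sum>c=1..l. if a \<le> c \<and> c < Suc l then F (Suc c) - F c else 0)"
    using down by (intro sum.cong) (auto simp: F_def)
  also have "\<dots> = F (Suc l) - F a"
    using a by (intro sum_telescope_between) auto
  finally show ?thesis
    using a by (simp add: F_def)
qed

lemma sum_alpha_gamma_cancel:
  fixes alp gam D :: "nat \<Rightarrow> 'a::comm_ring"
  assumes gam_step: "\<And>c. 0 < c \<Longrightarrow> c < l \<Longrightarrow> gam c = alp (c + 1) + gam (c + 1)"
  shows "(\<Sum>c\<in>{1..<l}. alp (c + 1) * D c)
    + (\<Sum>c=1..l. - gam c * ((if c < l then D c else 0) - (if 1 < c then D (c - 1) else 0))) = 0"
proof -
  have "(\<Sum>c=1..l. - gam c * ((if c < l then D c else 0) - (if 1 < c then D (c - 1) else 0)))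
      = (\<Sum>c=1..l. if 1 < c then gam (c - 1 + 1) * D (c - 1) else 0) - (\<Sum>c=1..l. if c < l then gam c * D c else 0)"
    by (simp add: sum_subtractf[symmetric] algebra_simps) (intro sum.cong; auto)
  also have "\<dots> = (\<Sum>c\<in>{1..<l}. (gam (c + 1) - gam c) * D c)"
    by (simp only: sum_shift_restrict[where g = "\<lambda>c. gam (c + 1) * D c"] sum_lt_restrict sum_subtractf[symmetric]
        left_diff_distrib)
  also have "\<dots> = - (\<Sum>c\<in>{1..<l}. alp (c + 1) * D c)"
    by (simp add: sum_negf[symmetric] gam_step)
  finally show ?thesis
    by simp
qed

lemma sum_cells_reorder:
  fixes q :: "nat \<Rightarrow> nat"
  assumes qQ: "\<And>c. 0 < c \<Longrightarrow> c \<le> l \<Longrightarrow> q c \<le> Q"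
  shows "(\<Sum>c=1..l. \<Sum>s=1..q c. \<Sum>c'=1..l. F c s c')
       = (\<Sum>c'=1..l. \<Sum>s=1..Q. \<Sum>c=1..l. if s \<le> q c then F c s c' else (0::'a::comm_monoid_add))"
proof -
  have "(\<Sum>c=1..l. \<Sum>s=1..q c. \<Sum>c'=1..l. F c s c')
      = (\<Sum>c=1..l. \<Sum>s=1..Q. \<Sum>c'=1..l. if s \<le> q c then F c s c' else 0)"
  proof (rule sum.cong[OF refl])
    fix c
    assume "c \<in> {1..l}"
    then have "q c \<le> Q"
      using qQ by auto
    then have "(\<Sum>s=1..q c. \<Sum>c'=1..l. F c s c') = (\<Sum>s=1..Q. if s \<le> q c then \<Sum>c'=1..l. F c s c' else 0)"
      by (rule sum_le_restrict)
    also have "\<dots> = (\<Sum>s=1..Q. \<Sum>c'=1..l. if s \<le> q c then F c s c' else 0)"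
      by (intro sum.cong refl) simp
    finally show "(\<Sum>s=1..q c. \<Sum>c'=1..l. F c s c') = (\<Sum>s=1..Q. \<Sum>c'=1..l. if s \<le> q c then F c s c' else 0)" .
  qed
  also have "\<dots> = (\<Sum>c'=1..l. \<Sum>s=1..Q. \<Sum>c=1..l. if s \<le> q c then F c s c' else 0)"
    by (subst sum.swap) (subst (2) sum.swap, subst sum.swap, rule refl)
  finally show ?thesis .
qed

lemma sum_cells_cancel_EPsi:
  fixes Cf :: "nat \<Rightarrow> nat \<Rightarrow> nat \<Rightarrow> 'a::ab_group_add"
  shows "(\<Sum>c\<in>{1..<l}. \<Sum>s=1..q c. Cf c s (c + 1))
    + (\<Sum>c=1..l. \<Sum>s=1..q c. \<Sum>c'=1..l.
         if c < c' \<and> s \<le> m then (if c' < l then Cf c s (c' + 1) else 0) - Cf c s c' else 0)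
    - (\<Sum>c=1..l. \<Sum>s=1..q c. \<Sum>c'=1..l.
         if c' \<le> c \<and> m < s then (if c' < l then Cf c s (c' + 1) else 0) - (if 1 < c' then Cf c s c' else 0) else 0)
    = 0"
proof -
  have lower: "(\<Sum>c'=1..l. if c < c' \<and> s \<le> m then (if c' < l then Cf c s (c' + 1) else 0) - Cf c s c' else 0)
      = (if s \<le> m then - (if c < l then Cf c s (c + 1) else 0) else 0)" if "c \<le> l" for c s
    using sum_telescope_above[OF that, of "Cf c s"] by (cases "s \<le> m") auto
  have upper: "(\<Sum>c'=1..l. if c' \<le> c \<and> m < s
                 then (if c' < l then Cf c s (c' + 1) else 0) - (if 1 < c' then Cf c s c' else 0) else 0)
      = (if m < s then (if c < l then Cf c s (c + 1) else 0) else 0)" if "0 < c" "c \<le> l" for c s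
    using sum_telescope_upto[OF that(2), of "Cf c s"] that by (cases "m < s") auto
  have "(\<Sum>c\<in>{1..<l}. \<Sum>s=1..q c. Cf c s (c + 1)) = (\<Sum>c=1..l. if c < l then \<Sum>s=1..q c. Cf c s (c + 1) else 0)"
    by (rule sum_lt_restrict[symmetric])
  also have "\<dots> = (\<Sum>c=1..l. \<Sum>s=1..q c. if c < l then Cf c s (c + 1) else 0)"
    by (intro sum.cong) auto
  moreover have "(\<Sum>c=1..l. \<Sum>s=1..q c. \<Sum>c'=1..l.
         if c < c' \<and> s \<le> m then (if c' < l then Cf c s (c' + 1) else 0) - Cf c s c' else 0)
      = (\<Sum>c=1..l. \<Sum>s=1..q c. if s \<le> m then - (if c < l then Cf c s (c + 1) else 0) else 0)"
    by (intro sum.cong refl lower) auto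
  moreover have "(\<Sum>c=1..l. \<Sum>s=1..q c. \<Sum>c'=1..l.
         if c' \<le> c \<and> m < s then (if c' < l then Cf c s (c' + 1) else 0) - (if 1 < c' then Cf c s c' else 0) else 0)
      = (\<Sum>c=1..l. \<Sum>s=1..q c. if m < s then (if c < l then Cf c s (c + 1) else 0) else 0)"
    by (intro sum.cong refl upper) auto
  moreover have "(\<Sum>c=1..l. \<Sum>s=1..q c. if c < l then Cf c s (c + 1) else 0)
      + (\<Sum>c=1..l. \<Sum>s=1..q c. if s \<le> m then - (if c < l then Cf c s (c + 1) else 0) else 0)
      - (\<Sum>c=1..l. \<Sum>s=1..q c. if m < s then (if c < l then Cf c s (c + 1) else 0) else 0) = 0"
    by (simp only: sum.distrib[symmetric] sum_subtractf[symmetric]) (intro sum.neutral ballI; auto)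
  ultimately show ?thesis
    by simp
qed

lemma sum_cells_telescope_below:
  fixes Bf :: "nat \<Rightarrow> nat \<Rightarrow> nat \<Rightarrow> 'a::ab_group_add"
  assumes qQ: "\<And>c. 0 < c \<Longrightarrow> c \<le> l \<Longrightarrow> q c \<le> Q" and mq: "\<And>c. 0 < c \<Longrightarrow> c \<le> l \<Longrightarrow> m \<le> q c"
  shows "(\<Sum>c=1..l. \<Sum>s=1..q c. \<Sum>c'=1..l.
            if c < c' \<and> s \<le> m then Bf c' (c + 1) s - (if 1 < c then Bf c' c s else 0) else 0)
       = (\<Sum>c'=1..l. \<Sum>s=1..Q. if s \<le> m \<and> 1 < c' then Bf c' c' s else 0)"
proof (rule trans[OF sum_cells_reorder[OF qQ]], assumption+, intro sum.cong refl)
  fix c' s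
  assume c': "c' \<in> {1..l}"
  show "(\<Sum>c=1..l. if s \<le> q c then if c < c' \<and> s \<le> m then Bf c' (c + 1) s - (if 1 < c then Bf c' c s else 0)
                                    else 0 else 0)
      = (if s \<le> m \<and> 1 < c' then Bf c' c' s else 0)"
  proof (cases "s \<le> m")
    case False
    then show ?thesis
      by (auto intro!: sum.neutral)
  next
    case True
    have "\<forall>c\<in>{1..l}. s \<le> q c"
    proof
      fix c
      assume "c \<in> {1..l}"
      then show "s \<le> q c"
        using True mq[of c] by simp
    qed
    with True have "(\<Sum>c=1..l. if s \<le> q c then if c < c' \<and> s \<le> m
          then Bf c' (c + 1) s - (if 1 < c then Bf c' c s else 0) else 0 else 0)
        = (\<Sum>c=1..l. if c < c' then Bf c' (c + 1) s - (if 1 < c then Bf c' c s else 0) else 0)"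
      by (intro sum.cong refl) auto
    also have "\<dots> = (if 1 < c' then Bf c' c' s else 0)"
      using c' by (intro sum_telescope_below) auto
    finally show ?thesis
      using True by simp
  qed
qed

lemma sum_cells_telescope_above:
  fixes Bf :: "nat \<Rightarrow> nat \<Rightarrow> nat \<Rightarrow> 'a::ab_group_add"
  assumes qQ: "\<And>c. 0 < c \<Longrightarrow> c \<le> l \<Longrightarrow> q c \<le> Q" and dec: "\<And>c. 0 < c \<Longrightarrow> c < l \<Longrightarrow> q (c + 1) \<le> q c"
  shows "(\<Sum>c=1..l. \<Sum>s=1..q c. \<Sum>c'=1..l. if c' \<le> c \<and> m < s
            then (if c < l \<and> s \<le> q (c + 1) then Bf c' (c + 1) s else 0) - (if 1 < c then Bf c' c s else 0) else 0)
       = (\<Sum>c'=1..l. \<Sum>s=1..Q. if m < s then - (if s \<le> q c' \<and> 1 < c' then Bf c' c' s else 0) else 0)"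
proof (rule trans[OF sum_cells_reorder[OF qQ]], assumption+, intro sum.cong refl)
  fix c' s
  assume c': "c' \<in> {1..l}"
  show "(\<Sum>c=1..l. if s \<le> q c then if c' \<le> c \<and> m < s
            then (if c < l \<and> s \<le> q (c + 1) then Bf c' (c + 1) s else 0) - (if 1 < c then Bf c' c s else 0)
            else 0 else 0)
      = (if m < s then - (if s \<le> q c' \<and> 1 < c' then Bf c' c' s else 0) else 0)"
  proof (cases "m < s")
    case False
    then show ?thesis
      by (auto intro!: sum.neutral)
  next
    case True
    then have "(\<Sum>c=1..l. if s \<le> q c then if c' \<le> c \<and> m < s
            then (if c < l \<and> s \<le> q (c + 1) then Bf c' (c + 1) s else 0) - (if 1 < c then Bf c' c s else 0)
            else 0 else 0)
        = (\<Sum>c=1..l. if s \<le> q c \<and> c' \<le> c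
            then (if c < l \<and> s \<le> q (c + 1) then Bf c' (c + 1) s else 0) - (if 1 < c then Bf c' c s else 0) else 0)"
      by (intro sum.cong) auto
    also have "\<dots> = - (if s \<le> q c' \<and> 1 < c' then Bf c' c' s else 0)"
    proof (rule sum_telescope_above_downclosed)
      show "s \<le> q c" if "0 < c" "c < l" "s \<le> q (c + 1)" for c
        using dec[OF that(1,2)] that(3) by simp
    qed (use c' in auto)
    finally show ?thesis
      using True by simp
  qed
qed

lemma sum_cells_cancel_PsiE:
  fixes Bf :: "nat \<Rightarrow> nat \<Rightarrow> nat \<Rightarrow> 'a::ab_group_add"
  assumes qQ: "\<And>c. 0 < c \<Longrightarrow> c \<le> l \<Longrightarrow> q c \<le> Q"
    and mq: "\<And>c. 0 < c \<Longrightarrow> c \<le> l \<Longrightarrow> m \<le> q c"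
    and dec: "\<And>c. 0 < c \<Longrightarrow> c < l \<Longrightarrow> q (c + 1) \<le> q c"
  shows "(\<Sum>c=1..l. \<Sum>s=1..q c. \<Sum>c'=1..l.
            if c < c' \<and> s \<le> m then Bf c' (c + 1) s - (if 1 < c then Bf c' c s else 0) else 0)
    - (\<Sum>c=1..l. \<Sum>s=1..q c. \<Sum>c'=1..l. if c' \<le> c \<and> m < s
            then (if c < l \<and> s \<le> q (c + 1) then Bf c' (c + 1) s else 0) - (if 1 < c then Bf c' c s else 0) else 0)
    - (\<Sum>c\<in>{1..<l}. \<Sum>s=1..q (c + 1). Bf (c + 1) (c + 1) s)
    = 0"
proof -
  have "(\<Sum>c\<in>{1..<l}. \<Sum>s=1..q (c + 1). Bf (c + 1) (c + 1) s)
      = (\<Sum>c'=1..l. if 1 < c' then \<Sum>s=1..q (c' - 1 + 1). Bf (c' - 1 + 1) (c' - 1 + 1) s else 0)"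
    by (rule sum_shift_restrict[symmetric])
  also have "\<dots> = (\<Sum>c'=1..l. \<Sum>s=1..Q. if s \<le> q c' \<and> 1 < c' then Bf c' c' s else 0)"
  proof (intro sum.cong refl)
    fix c'
    assume "c' \<in> {1..l}"
    then have "q c' \<le> Q"
      using qQ by auto
    then have "(\<Sum>s=1..q c'. Bf c' c' s) = (\<Sum>s=1..Q. if s \<le> q c' then Bf c' c' s else 0)"
      by (rule sum_le_restrict)
    then show "(if 1 < c' then \<Sum>s=1..q (c' - 1 + 1). Bf (c' - 1 + 1) (c' - 1 + 1) s else 0)
        = (\<Sum>s=1..Q. if s \<le> q c' \<and> 1 < c' then Bf c' c' s else 0)"
      by (auto intro: sum.cong)
  qed
  finally have shifted: "(\<Sum>c\<in>{1..<l}. \<Sum>s=1..q (c + 1). Bf (c + 1) (c + 1) s)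
      = (\<Sum>c'=1..l. \<Sum>s=1..Q. if s \<le> q c' \<and> 1 < c' then Bf c' c' s else 0)" .
  have lower: "(\<Sum>c=1..l. \<Sum>s=1..q c. \<Sum>c'=1..l.
            if c < c' \<and> s \<le> m then Bf c' (c + 1) s - (if 1 < c then Bf c' c s else 0) else 0)
       = (\<Sum>c'=1..l. \<Sum>s=1..Q. if s \<le> m \<and> 1 < c' then Bf c' c' s else 0)"
    using qQ mq by (rule sum_cells_telescope_below)
  have upper: "(\<Sum>c=1..l. \<Sum>s=1..q c. \<Sum>c'=1..l. if c' \<le> c \<and> m < s
            then (if c < l \<and> s \<le> q (c + 1) then Bf c' (c + 1) s else 0) - (if 1 < c then Bf c' c s else 0) else 0)
       = (\<Sum>c'=1..l. \<Sum>s=1..Q. if m < s then - (if s \<le> q c' \<and> 1 < c' then Bf c' c' s else 0) else 0)"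
    using qQ dec by (rule sum_cells_telescope_above)
  have "(if s \<le> m \<and> 1 < c' then Bf c' c' s else 0)
      - (if m < s then - (if s \<le> q c' \<and> 1 < c' then Bf c' c' s else 0) else 0)
      - (if s \<le> q c' \<and> 1 < c' then Bf c' c' s else 0) = 0" if "c' \<in> {1..l}" for c' s
    using mq[of c'] that by auto
  then show ?thesis
    unfolding lower upper shifted sum_subtractf[symmetric] by (intro sum.neutral ballI) auto
qed

lemma sum_cells_cancel:
  fixes Bf Cf :: "nat \<Rightarrow> nat \<Rightarrow> nat \<Rightarrow> 'a::comm_ring" and H D alp gam :: "nat \<Rightarrow> 'a"
  assumes qQ: "\<And>c. 0 < c \<Longrightarrow> c \<le> l \<Longrightarrow> q c \<le> Q"
    and mq: "\<And>c. 0 < c \<Longrightarrow> c \<le> l \<Longrightarrow> m \<le> q c"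
    and dec: "\<And>c. 0 < c \<Longrightarrow> c < l \<Longrightarrow> q (c + 1) \<le> q c"
    and gam_step: "\<And>c. 0 < c \<Longrightarrow> c < l \<Longrightarrow> gam c = alp (c + 1) + gam (c + 1)"
  shows "(\<Sum>c\<in>{1..<l}. (\<Sum>s=1..q c. Cf c s (c + 1)) - (\<Sum>s=1..q (c + 1). Bf (c + 1) (c + 1) s)
            + alp (c + 1) * D c + (if c + 1 < l then H c else 0) - (if 1 < c then H (c - 1) else 0))
     + (\<Sum>c=1..l. - gam c * ((if c < l then D c else 0) - (if 1 < c then D (c - 1) else 0)))
     + (\<Sum>c=1..l. \<Sum>s=1..q c. \<Sum>c'=1..l. if c < c' \<and> s \<le> m then
          (Bf c' (c + 1) s - (if 1 < c then Bf c' c s else 0))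
          + ((if c' < l then Cf c s (c' + 1) else 0) - Cf c s c') else 0)
     - (\<Sum>c=1..l. \<Sum>s=1..q c. \<Sum>c'=1..l. if c' \<le> c \<and> m < s then
          ((if c < l \<and> s \<le> q (c + 1) then Bf c' (c + 1) s else 0) - (if 1 < c then Bf c' c s else 0))
          + ((if c' < l then Cf c s (c' + 1) else 0) - (if 1 < c' then Cf c s c' else 0)) else 0)
     = 0"
proof -
  have if_add: "(if P then a + b else 0) = (if P then a else 0) + (if P then b else 0)" for P and a b :: 'a
    by simp
  have H: "(\<Sum>c\<in>{1..<l}. (if c + 1 < l then H c else 0) - (if 1 < c then H (c - 1) else 0)) = 0"
  proof -
    have "{1..<l} = {1..l - 1}"
      by auto
    moreover have "c + 1 < l \<longleftrightarrow> c < l - 1" for c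
      by auto
    ultimately show ?thesis
      using sum_telescope_shift[of "l - 1" H] by simp
  qed
  have PsiE: "(\<Sum>c=1..l. \<Sum>s=1..q c. \<Sum>c'=1..l.
            if c < c' \<and> s \<le> m then Bf c' (c + 1) s - (if 1 < c then Bf c' c s else 0) else 0)
    - (\<Sum>c=1..l. \<Sum>s=1..q c. \<Sum>c'=1..l. if c' \<le> c \<and> m < s
            then (if c < l \<and> s \<le> q (c + 1) then Bf c' (c + 1) s else 0) - (if 1 < c then Bf c' c s else 0) else 0)
    - (\<Sum>c\<in>{1..<l}. \<Sum>s=1..q (c + 1). Bf (c + 1) (c + 1) s) = 0"
    using qQ mq dec by (rule sum_cells_cancel_PsiE)
  have D: "(\<Sum>c\<in>{1..<l}. alp (c + 1) * D c)
    + (\<Sum>c=1..l. - gam c * ((if c < l then D c else 0) - (if 1 < c then D (c - 1) else 0))) = 0"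
    using gam_step by (rule sum_alpha_gamma_cancel)
  have EPsi: "(\<Sum>c\<in>{1..<l}. \<Sum>s=1..q c. Cf c s (c + 1))
    + (\<Sum>c=1..l. \<Sum>s=1..q c. \<Sum>c'=1..l.
         if c < c' \<and> s \<le> m then (if c' < l then Cf c s (c' + 1) else 0) - Cf c s c' else 0)
    - (\<Sum>c=1..l. \<Sum>s=1..q c. \<Sum>c'=1..l.
         if c' \<le> c \<and> m < s then (if c' < l then Cf c s (c' + 1) else 0) - (if 1 < c' then Cf c s c' else 0) else 0)
    = 0"
    by (rule sum_cells_cancel_EPsi)
  have linear: "(\<Sum>c\<in>{1..<l}. (\<Sum>s=1..q c. Cf c s (c + 1)) - (\<Sum>s=1..q (c + 1). Bf (c + 1) (c + 1) s)
            + alp (c + 1) * D c + (if c + 1 < l then H c else 0) - (if 1 < c then H (c - 1) else 0))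
      = (\<Sum>c\<in>{1..<l}. \<Sum>s=1..q c. Cf c s (c + 1)) - (\<Sum>c\<in>{1..<l}. \<Sum>s=1..q (c + 1). Bf (c + 1) (c + 1) s)
        + (\<Sum>c\<in>{1..<l}. alp (c + 1) * D c)
        + (\<Sum>c\<in>{1..<l}. (if c + 1 < l then H c else 0) - (if 1 < c then H (c - 1) else 0))"
    by (simp add: sum.distrib sum_subtractf algebra_simps)
  have rearrange: "(c - b + d + h) + t1 + (b2 + c2) - (b3 + c3) = (b2 - b3 - b) + (c + c2 - c3) + (d + t1) + h"
    for c b d h t1 b2 c2 b3 c3 :: 'a
    by (simp add: algebra_simps)
  show ?thesis
    unfolding linear if_add sum.distrib rearrange PsiE EPsi D H by simp
qed

definition coeff_EPsi :: "(nat \<Rightarrow> nat) \<Rightarrow> nat \<Rightarrow> nat \<Rightarrow> word \<Rightarrow> nat \<Rightarrow> nat \<Rightarrow> nat \<Rightarrow> complex" where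
  "coeff_EPsi q p r x c s c' = word_delta
     [(E (cell_index q c s) (cell_index q c r), -1), (Psi (cell_index q c' p) (cell_index q (c' - 1) s), -1)] x"

definition coeff_PsiE :: "(nat \<Rightarrow> nat) \<Rightarrow> nat \<Rightarrow> nat \<Rightarrow> word \<Rightarrow> nat \<Rightarrow> nat \<Rightarrow> nat \<Rightarrow> complex" where
  "coeff_PsiE q p r x c' c s = word_delta
     [(Psi (cell_index q c s) (cell_index q (c - 1) r), -1), (E (cell_index q c' p) (cell_index q c' s), -1)] x"

definition coeff_Psi :: "(nat \<Rightarrow> nat) \<Rightarrow> nat \<Rightarrow> nat \<Rightarrow> word \<Rightarrow> nat \<Rightarrow> complex" where
  "coeff_Psi q p r x c = word_delta [(Psi (cell_index q (c + 2) p) (cell_index q c r), -1)] x"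

definition coeff_dPsi :: "(nat \<Rightarrow> nat) \<Rightarrow> nat \<Rightarrow> nat \<Rightarrow> word \<Rightarrow> nat \<Rightarrow> complex" where
  "coeff_dPsi q p r x c = word_delta [(Psi (cell_index q (c + 1) p) (cell_index q c r), -2)] x"

lemma vec_of_d0_gen_cells:
  assumes c: "0 < c" "c < l" and p: "0 < p" "p \<le> q (c + 1)" and r: "0 < r" "r \<le> q c"
    and p2: "c + 1 < l \<Longrightarrow> p \<le> q (c + 2)"
  shows "vec_of (d0_gen q l k (cell_index q (c + 1) p) (cell_index q c r)) x =
     (\<Sum>s=1..q c. coeff_EPsi q p r x c s (c + 1)) - (\<Sum>s=1..q (c + 1). coeff_PsiE q p r x (c + 1) (c + 1) s)
     + alpha q l k (c + 1) * coeff_dPsi q p r x c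
     + (if c + 1 < l then coeff_Psi q p r x c else 0) - (if 1 < c then coeff_Psi q p r x (c - 1) else 0)"
proof -
  let ?i = "cell_index q (c + 1) p" and ?j = "cell_index q c r"
  have ci: "colq q ?i = c + 1" and cj: "colq q ?j = c"
    using c p r by simp_all
  have EPsi: "vec_of [(1, [(E r' ?j, -1), (Psi ?i r', -1)]).
                r' \<leftarrow> idx q l, colq q r' < colq q ?i \<and> colq q ?j \<le> colq q r'] x
      = (\<Sum>s=1..q c. coeff_EPsi q p r x c s (c + 1))"
  proof -
    have col: "colq q r' < c + 1 \<and> c \<le> colq q r' \<longleftrightarrow> colq q r' = c" for r'
      by auto
    show ?thesis
      unfolding vec_of_comprehension ci cj col sum_list_idx_column using c by (simp add: coeff_EPsi_def)
  qed
  have PsiE: "vec_of [(-1, [(Psi r' ?j, -1), (E ?i r', -1)]).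
                r' \<leftarrow> idx q l, colq q ?j < colq q r' \<and> colq q r' \<le> colq q ?i] x
      = - (\<Sum>s=1..q (c + 1). coeff_PsiE q p r x (c + 1) (c + 1) s)"
  proof -
    have col: "c < colq q r' \<and> colq q r' \<le> c + 1 \<longleftrightarrow> colq q r' = c + 1" for r'
      by auto
    show ?thesis
      unfolding vec_of_comprehension ci cj col sum_list_idx_column using c by (simp add: coeff_PsiE_def sum_negf)
  qed
  show ?thesis
    unfolding d0_gen_def vec_of_append EPsi PsiE
    using c p r p2 by (simp add: coeff_dPsi_def coeff_Psi_def word_delta_def numeral_2_eq_2)
qed

lemma vec_of_d0w_pair_cells:
  assumes c: "0 < c" "c \<le> l" and c': "0 < c'" "c' \<le> l" and s: "0 < s" "s \<le> q c" "s \<le> q c'"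
    and r: "0 < r" "r \<le> q c" and p: "0 < p" "p \<le> q c'"
  shows "vec_of (d0w q l k [(E (cell_index q c s) (cell_index q c r), -1),
                           (E (cell_index q c' p) (cell_index q c' s), -1)]) x =
     (if c < l \<and> s \<le> q (c + 1) then coeff_PsiE q p r x c' (c + 1) s else 0)
     - (if 1 < c then coeff_PsiE q p r x c' c s else 0)
     + (if c' < l \<and> p \<le> q (c' + 1) then coeff_EPsi q p r x c s (c' + 1) else 0)
     - (if 1 < c' then coeff_EPsi q p r x c s c' else 0)"
  using assms by (subst vec_of_d0w_pair_same_columns) (simp_all add: coeff_PsiE_def coeff_EPsi_def)

definition W2_linear :: "(nat \<Rightarrow> nat) \<Rightarrow> nat \<Rightarrow> nat \<Rightarrow> nat \<Rightarrow> lc" where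
  "W2_linear q l p r = [(1, [(E i j, -1)]). i \<leftarrow> idx q l, j \<leftarrow> idx q l,
     colq q i = colq q j + 1 \<and> rowq q i = p \<and> rowq q j = r]"

definition W2_derivative :: "(nat \<Rightarrow> nat) \<Rightarrow> nat \<Rightarrow> complex \<Rightarrow> nat \<Rightarrow> nat \<Rightarrow> lc" where
  "W2_derivative q l k p r = [(- gamma q l k (colq q i), [(E i j, -2)]). i \<leftarrow> idx q l, j \<leftarrow> idx q l,
     colq q i = colq q j \<and> rowq q i = p \<and> rowq q j = r]"

definition W2_full_rows :: "(nat \<Rightarrow> nat) \<Rightarrow> nat \<Rightarrow> nat \<Rightarrow> nat \<Rightarrow> lc" where
  "W2_full_rows q l p r = [(1, [(E u j, -1), (E i v, -1)]).
     u \<leftarrow> idx q l, j \<leftarrow> idx q l, i \<leftarrow> idx q l, v \<leftarrow> idx q l,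
     colq q u = colq q j \<and> colq q j < colq q i \<and> colq q i = colq q v
     \<and> rowq q u = rowq q v \<and> rowq q v \<le> q l \<and> rowq q i = p \<and> rowq q j = r]"

definition W2_partial_rows :: "(nat \<Rightarrow> nat) \<Rightarrow> nat \<Rightarrow> nat \<Rightarrow> nat \<Rightarrow> lc" where
  "W2_partial_rows q l p r = [(-1, [(E u j, -1), (E i v, -1)]).
     u \<leftarrow> idx q l, j \<leftarrow> idx q l, i \<leftarrow> idx q l, v \<leftarrow> idx q l,
     colq q u = colq q j \<and> colq q i \<le> colq q j \<and> colq q i = colq q v
     \<and> q l < rowq q v \<and> rowq q u = rowq q v \<and> rowq q i = p \<and> rowq q j = r]"

lemma W2_split:
  "W2 q l k p r = W2_linear q l p r @ W2_derivative q l k p r @ W2_full_rows q l p r @ W2_partial_rows q l p r"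
  by (simp add: W2_def W2_linear_def W2_derivative_def W2_full_rows_def W2_partial_rows_def)

lemma gamma_step: "0 < c \<Longrightarrow> c < l \<Longrightarrow> gamma q l k c = alpha q l k (c + 1) + gamma q l k (c + 1)"
  by (simp add: gamma_def sum.atLeast_Suc_atMost)

locale common_rows =
  fixes q :: "nat \<Rightarrow> nat" and l p r :: nat
  assumes antimono: "\<And>a b. 0 < a \<Longrightarrow> a \<le> b \<Longrightarrow> b \<le> l \<Longrightarrow> q b \<le> q a"
    and p: "0 < p" "p \<le> q l" and r: "0 < r" "r \<le> q l"
begin

lemma p_le_q: "0 < c \<Longrightarrow> c \<le> l \<Longrightarrow> p \<le> q c"
  using antimono[of c l] p by simp

lemma r_le_q: "0 < c \<Longrightarrow> c \<le> l \<Longrightarrow> r \<le> q c"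
  using antimono[of c l] r by simp

lemma vec_of_d0_W2_linear:
  "vec_of (d0 q l k (W2_linear q l p r)) x
     = (\<Sum>c\<in>{1..<l}. vec_of (d0w q l k [(E (cell_index q (c + 1) p) (cell_index q c r), -1)]) x)"
proof -
  have "vec_of (d0 q l k (W2_linear q l p r)) x
      = (\<Sum>c=1..l. if 1 < c \<and> p \<le> q c \<and> r \<le> q (c - 1)
           then 1 * vec_of (d0w q l k [(E (cell_index q c p) (cell_index q (c - 1) r), -1)]) x else 0)"
    unfolding vec_of_d0 W2_linear_def sum_list_comprehension2 by (rule sum_list_idx_pairs[OF p(1) r(1)])
  also have "\<dots> = (\<Sum>c=1..l. if 1 < c
      then vec_of (d0w q l k [(E (cell_index q (c - 1 + 1) p) (cell_index q (c - 1) r), -1)]) x else 0)"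
    using p_le_q r_le_q by (intro sum.cong refl) auto
  also have "\<dots> = (\<Sum>c\<in>{1..<l}. vec_of (d0w q l k [(E (cell_index q (c + 1) p) (cell_index q c r), -1)]) x)"
    by (rule sum_shift_restrict)
  finally show ?thesis .
qed

lemma W2_linear_equiv:
  "(\<lambda>x. vec_of (d0 q l k (W2_linear q l p r)) x
      - (\<Sum>c\<in>{1..<l}. vec_of (d0_gen q l k (cell_index q (c + 1) p) (cell_index q c r)) x)) \<in> Jset q l k"
proof -
  let ?i = "\<lambda>c. cell_index q (c + 1) p" and ?j = "\<lambda>c. cell_index q c r"
  have "(\<lambda>x. \<Sum>c\<in>{1..<l}. vec_of (d0w q l k [(E (?i c) (?j c), -1)]) x - vec_of (d0_gen q l k (?i c) (?j c)) x)
      \<in> Jset q l k"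
  proof (rule Jset_sum)
    fix c
    assume "c \<in> {1..<l}"
    then show "(\<lambda>x. vec_of (d0w q l k [(E (?i c) (?j c), -1)]) x - vec_of (d0_gen q l k (?i c) (?j c)) x)
        \<in> Jset q l k"
      using p_le_q[of "c + 1"] r_le_q[of c] p r
      by (intro vec_of_d0w_letter_equiv cell_index_bounds) auto
  qed simp
  then show ?thesis
    by (rule Jset_eqI) (simp only: vec_of_d0_W2_linear sum_subtractf)
qed

lemma sum_vec_of_d0_gen_cells:
  "(\<Sum>c\<in>{1..<l}. vec_of (d0_gen q l k (cell_index q (c + 1) p) (cell_index q c r)) x)
     = (\<Sum>c\<in>{1..<l}. (\<Sum>s=1..q c. coeff_EPsi q p r x c s (c + 1))
         - (\<Sum>s=1..q (c + 1). coeff_PsiE q p r x (c + 1) (c + 1) s)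
         + alpha q l k (c + 1) * coeff_dPsi q p r x c
         + (if c + 1 < l then coeff_Psi q p r x c else 0) - (if 1 < c then coeff_Psi q p r x (c - 1) else 0))"
  using p_le_q r_le_q p r by (intro sum.cong refl vec_of_d0_gen_cells) auto

lemma vec_of_d0_W2_derivative:
  "vec_of (d0 q l k (W2_derivative q l k p r)) x
     = (\<Sum>c=1..l. - gamma q l k c * ((if c < l then coeff_dPsi q p r x c else 0)
                                    - (if 1 < c then coeff_dPsi q p r x (c - 1) else 0)))"
proof -
  have "vec_of (d0 q l k (W2_derivative q l k p r)) x
      = sum_list (map (\<lambda>i. sum_list (map (\<lambda>j. if colq q i = colq q j + 0 \<and> rowq q i = p \<and> rowq q j = r
          then - gamma q l k (colq q i) * vec_of (d0w q l k [(E i j, -2)]) x else 0) (idx q l))) (idx q l))"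
    unfolding vec_of_d0 W2_derivative_def sum_list_comprehension2 by simp
  also have "\<dots> = (\<Sum>c=1..l. if 0 < c \<and> p \<le> q c \<and> r \<le> q (c - 0)
      then - gamma q l k (colq q (cell_index q c p))
             * vec_of (d0w q l k [(E (cell_index q c p) (cell_index q (c - 0) r), -2)]) x else 0)"
    by (rule sum_list_idx_pairs[OF p(1) r(1)])
  also have "\<dots> = (\<Sum>c=1..l. - gamma q l k c * ((if c < l then coeff_dPsi q p r x c else 0)
                                    - (if 1 < c then coeff_dPsi q p r x (c - 1) else 0)))"
    using p r p_le_q r_le_q
    by (intro sum.cong refl) (auto simp: vec_of_d0w_same_column_deriv coeff_dPsi_def Suc_le_eq simp del: d0w.simps)
  finally show ?thesis .
qed

lemma vec_of_d0_W2_full_rows: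
  "vec_of (d0 q l k (W2_full_rows q l p r)) x
     = (\<Sum>c=1..l. \<Sum>s=1..q c. \<Sum>c'=1..l. if c < c' \<and> s \<le> q l then
          (coeff_PsiE q p r x c' (c + 1) s - (if 1 < c then coeff_PsiE q p r x c' c s else 0))
          + ((if c' < l then coeff_EPsi q p r x c s (c' + 1) else 0) - coeff_EPsi q p r x c s c') else 0)"
proof -
  have cond: "colq q u = colq q j \<and> colq q j < colq q i \<and> colq q i = colq q v \<and> rowq q u = rowq q v
        \<and> rowq q v \<le> q l \<and> rowq q i = p \<and> rowq q j = r
      \<longleftrightarrow> colq q u = colq q j \<and> rowq q j = r \<and> rowq q u \<le> q l \<and> colq q j < colq q i \<and> rowq q i = p
        \<and> colq q i = colq q v \<and> rowq q u = rowq q v" for u j i v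
    by auto
  have "vec_of (d0 q l k (W2_full_rows q l p r)) x
      = (\<Sum>c=1..l. \<Sum>s=1..q c. \<Sum>c'=1..l. if s \<le> q l \<and> c < c' \<and> s \<le> q c' then
          1 * vec_of (d0w q l k [(E (cell_index q c s) (cell_index q c r), -1),
                                 (E (cell_index q c' p) (cell_index q c' s), -1)]) x else 0)"
    unfolding vec_of_d0 W2_full_rows_def sum_list_comprehension4 cond
    using p(1) r(1) p_le_q r_le_q by (rule sum_list_idx_quadruples)
  also have "\<dots> = (\<Sum>c=1..l. \<Sum>s=1..q c. \<Sum>c'=1..l. if c < c' \<and> s \<le> q l then
          (coeff_PsiE q p r x c' (c + 1) s - (if 1 < c then coeff_PsiE q p r x c' c s else 0))
          + ((if c' < l then coeff_EPsi q p r x c s (c' + 1) else 0) - coeff_EPsi q p r x c s c') else 0)"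
  proof (intro sum.cong refl)
    fix c s c'
    assume "c \<in> {1..l}" "s \<in> {1..q c}" "c' \<in> {1..l}"
    moreover have "q l \<le> q c'" "q l \<le> q (c + 1)" if "c < c'"
      using antimono that \<open>c' \<in> {1..l}\<close> by auto
    ultimately show "(if s \<le> q l \<and> c < c' \<and> s \<le> q c' then
          1 * vec_of (d0w q l k [(E (cell_index q c s) (cell_index q c r), -1),
                                 (E (cell_index q c' p) (cell_index q c' s), -1)]) x else 0)
        = (if c < c' \<and> s \<le> q l then
          (coeff_PsiE q p r x c' (c + 1) s - (if 1 < c then coeff_PsiE q p r x c' c s else 0))
          + ((if c' < l then coeff_EPsi q p r x c s (c' + 1) else 0) - coeff_EPsi q p r x c s c') else 0)"
      using p r p_le_q[of c'] p_le_q[of "c' + 1"] r_le_q[of c]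
      by (auto simp: vec_of_d0w_pair_cells simp del: d0w.simps)
  qed
  finally show ?thesis .
qed

lemma vec_of_d0_W2_partial_rows:
  "vec_of (d0 q l k (W2_partial_rows q l p r)) x
     = - (\<Sum>c=1..l. \<Sum>s=1..q c. \<Sum>c'=1..l. if c' \<le> c \<and> q l < s then
          ((if c < l \<and> s \<le> q (c + 1) then coeff_PsiE q p r x c' (c + 1) s else 0)
            - (if 1 < c then coeff_PsiE q p r x c' c s else 0))
          + ((if c' < l then coeff_EPsi q p r x c s (c' + 1) else 0)
            - (if 1 < c' then coeff_EPsi q p r x c s c' else 0)) else 0)"
proof -
  have cond: "colq q u = colq q j \<and> colq q i \<le> colq q j \<and> colq q i = colq q v \<and> q l < rowq q v
        \<and> rowq q u = rowq q v \<and> rowq q i = p \<and> rowq q j = r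
      \<longleftrightarrow> colq q u = colq q j \<and> rowq q j = r \<and> q l < rowq q u \<and> colq q i \<le> colq q j \<and> rowq q i = p
        \<and> colq q i = colq q v \<and> rowq q u = rowq q v" for u j i v
    by auto
  have "vec_of (d0 q l k (W2_partial_rows q l p r)) x
      = (\<Sum>c=1..l. \<Sum>s=1..q c. \<Sum>c'=1..l. if q l < s \<and> c' \<le> c \<and> s \<le> q c' then
          -1 * vec_of (d0w q l k [(E (cell_index q c s) (cell_index q c r), -1),
                                  (E (cell_index q c' p) (cell_index q c' s), -1)]) x else 0)"
    unfolding vec_of_d0 W2_partial_rows_def sum_list_comprehension4 cond
    using p(1) r(1) p_le_q r_le_q by (rule sum_list_idx_quadruples)
  also have "\<dots> = (\<Sum>c=1..l. \<Sum>s=1..q c. \<Sum>c'=1..l. - (if c' \<le> c \<and> q l < s then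
          ((if c < l \<and> s \<le> q (c + 1) then coeff_PsiE q p r x c' (c + 1) s else 0)
            - (if 1 < c then coeff_PsiE q p r x c' c s else 0))
          + ((if c' < l then coeff_EPsi q p r x c s (c' + 1) else 0)
            - (if 1 < c' then coeff_EPsi q p r x c s c' else 0)) else 0))"
  proof (intro sum.cong refl)
    fix c s c'
    assume "c \<in> {1..l}" "s \<in> {1..q c}" "c' \<in> {1..l}"
    moreover have "q c \<le> q c'" if "c' \<le> c"
      using antimono that \<open>c \<in> {1..l}\<close> \<open>c' \<in> {1..l}\<close> by auto
    ultimately show "(if q l < s \<and> c' \<le> c \<and> s \<le> q c' then
          -1 * vec_of (d0w q l k [(E (cell_index q c s) (cell_index q c r), -1),
                                  (E (cell_index q c' p) (cell_index q c' s), -1)]) x else 0)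
        = - (if c' \<le> c \<and> q l < s then
          ((if c < l \<and> s \<le> q (c + 1) then coeff_PsiE q p r x c' (c + 1) s else 0)
            - (if 1 < c then coeff_PsiE q p r x c' c s else 0))
          + ((if c' < l then coeff_EPsi q p r x c s (c' + 1) else 0)
            - (if 1 < c' then coeff_EPsi q p r x c s c' else 0)) else 0)"
      using p r p_le_q[of c'] p_le_q[of "c' + 1"] r_le_q[of c]
      by (auto simp: vec_of_d0w_pair_cells simp del: d0w.simps)
  qed
  finally show ?thesis
    by (simp only: sum_negf)
qed

lemma vec_of_d0_W2_in_Jset: "vec_of (d0 q l k (W2 q l k p r)) \<in> Jset q l k"
  using W2_linear_equiv
proof (rule Jset_eqI)
  fix x
  have "(\<Sum>c\<in>{1..<l}. vec_of (d0_gen q l k (cell_index q (c + 1) p) (cell_index q c r)) x)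
      + vec_of (d0 q l k (W2_derivative q l k p r)) x + vec_of (d0 q l k (W2_full_rows q l p r)) x
      + vec_of (d0 q l k (W2_partial_rows q l p r)) x = 0"
    unfolding sum_vec_of_d0_gen_cells vec_of_d0_W2_derivative vec_of_d0_W2_full_rows vec_of_d0_W2_partial_rows
      diff_conv_add_uminus[symmetric]
  proof (rule sum_cells_cancel)
    show "q c \<le> q 1" "q l \<le> q c" if "0 < c" "c \<le> l" for c
      using antimono that by auto
    show "q (c + 1) \<le> q c" if "0 < c" "c < l" for c
      using antimono that by auto
  qed (rule gamma_step)
  then show "vec_of (d0 q l k (W2 q l k p r)) x
      = vec_of (d0 q l k (W2_linear q l p r)) x
        - (\<Sum>c\<in>{1..<l}. vec_of (d0_gen q l k (cell_index q (c + 1) p) (cell_index q c r)) x)"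
    by (simp add: W2_split d0_append algebra_simps)
qed

end

theorem theorem4p1:
  fixes l :: nat and q :: "nat \<Rightarrow> nat" and k :: complex
  assumes "1 \<le> l"
    and "\<forall>s. 1 \<le> s \<and> s < l \<longrightarrow> q (Suc s) \<le> q s"
    and "\<forall>s. 1 \<le> s \<and> s \<le> l \<longrightarrow> 1 \<le> q s"
  shows "(\<forall>p r. ((1 \<le> p \<and> p \<le> q l \<and> 1 \<le> r \<and> r \<le> q l) \<or> (q l < p \<and> p = r \<and> p \<le> q 1))
                 \<longrightarrow> in_Walg q l k (W1 q l p r))
       \<and> (\<forall>p r. 1 \<le> p \<and> p \<le> q l \<and> 1 \<le> r \<and> r \<le> q l \<longrightarrow> in_Walg q l k (W2 q l k p r))"
proof -
  have antimono: "\<And>a b. 0 < a \<Longrightarrow> a \<le> b \<Longrightarrow> b \<le> l \<Longrightarrow> q b \<le> q a"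
    using antimono_of_Suc_le[OF assms(2)] by blast
  show ?thesis
  proof (intro conjI allI impI)
    fix p r
    assume "(1 \<le> p \<and> p \<le> q l \<and> 1 \<le> r \<and> r \<le> q l) \<or> (q l < p \<and> p = r \<and> p \<le> q 1)"
    then have "vec_of (d0 q l k (W1 q l p r)) = (\<lambda>_. 0)"
      using vec_of_d0_W1[OF antimono] by fastforce
    then show "in_Walg q l k (W1 q l p r)"
      unfolding in_Walg_def zero_in_V_def by (simp add: Jset.J_zero)
  next
    fix p r
    assume "1 \<le> p \<and> p \<le> q l \<and> 1 \<le> r \<and> r \<le> q l"
    then interpret common_rows q l p r
      using antimono by unfold_locales auto
    show "in_Walg q l k (W2 q l k p r)"
      unfolding in_Walg_def zero_in_V_def by (rule vec_of_d0_W2_in_Jset)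
  qed
qed

end
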